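(* Let $\mathcal{A}$ be a finite list of elements of $\mathbb{Z}^\ell$. The most degenerate constituent $f_{\rho_{\mathcal{A}}}(t)$ of the characteristic quasi-polynomial of $\mathcal{A}$ satisfies $$f_{\rho_{\mathcal{A}}}(t)=\chi^{\mathbb{C}^\times}_{\mathcal{A}}(t)=\chi^{\mathrm{arith}}_{\mathcal{A}}(t).$$
   Context: For a sublist $\mathcal{S}$ (distinguished by index), $r_{\mathcal{S}}$ is the rank of $\langle\mathcal{S}\rangle$; write $(\mathbb{Z}^\ell/\langle\mathcal{S}\rangle)_{\mathrm{tor}}\simeq\bigoplus_i\mathbb{Z}/d_{\mathcal{S},i}\mathbb{Z}$ with $d_{\mathcal{S},i}\mid d_{\mathcal{S},i+1}$, and $\rho_{\mathcal{A}}$ is the lcm over $\mathcal{S}$ of the largest $d_{\mathcal{S},i}$. The function $q\mapsto\#\{x\in(\mathbb{Z}/q\mathbb{Z})^\ell\mid\alpha(x)\neq0\ \forall\alpha\in\mathcal{A}\}$ is a quasi-polynomial with period $\rho_{\mathcal{A}}$ (Kamiya–Takemura–Terao); $f_{\rho_{\mathcal{A}}}(t)$ is the polynomial agreeing with it for all positive $q$ divisible by $\rho_{\mathcal{A}}$. $m(\mathcal{S};G)=\#\mathrm{Hom}((\mathbb{Z}^\ell/\langle\mathcal{S}\rangle)_{\mathrm{tor}},G)$, $\chi^G_{\mathcal{A}}(t)=\sum_{\mathcal{S}\subset\mathcal{A}}(-1)^{\#\mathcal{S}}m(\mathcal{S};G)t^{\ell-r_{\mathcal{S}}}$, and $\chi^{\mathrm{arith}}_{\mathcal{A}}(t)=\sum_{\mathcal{S}\subset\mathcal{A}}(-1)^{\#\mathcal{S}}m(\mathcal{S})t^{\ell-r_{\mathcal{S}}}$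 with $m(\mathcal{S})=\#(\mathbb{Z}^\ell/\langle\mathcal{S}\rangle)_{\mathrm{tor}}$. *)

theory Defs
  imports "HOL-Library.FuncSet" "HOL-Computational_Algebra.Polynomial"
begin

text \<open>Vectors of \<int>^l are represented as functions nat \<Rightarrow> int vanishing at indices \<ge> l.
  A list A of vectors is given; a sublist S is a set of indices S \<subseteq> {..<length A}.\<close>

definition zvec :: "nat \<Rightarrow> (nat \<Rightarrow> int) set" where
  "zvec l = {x. \<forall>i\<ge>l. x i = 0}"

definition lattice :: "(nat \<Rightarrow> int) list \<Rightarrow> nat set \<Rightarrow> (nat \<Rightarrow> int) set" where
  "lattice A S = {x. \<exists>c::nat \<Rightarrow> int. x = (\<lambda>i. \<Sum>j\<in>S. c j * (A ! j) i)}"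

definition zlin_indep :: "(nat \<Rightarrow> int) set \<Rightarrow> bool" where
  "zlin_indep V \<longleftrightarrow> (\<forall>c::(nat \<Rightarrow> int) \<Rightarrow> int.
      (\<lambda>i. \<Sum>v\<in>V. c v * v i) = (\<lambda>i. 0) \<longrightarrow> (\<forall>v\<in>V. c v = 0))"

definition rankS :: "(nat \<Rightarrow> int) list \<Rightarrow> nat set \<Rightarrow> nat" where
  "rankS A S = Max {card V | V. finite V \<and> V \<subseteq> lattice A S \<and> zlin_indep V}"

text \<open>Preimage in \<int>^l of the torsion subgroup of \<int>^l / <S>.\<close>
definition torsion :: "nat \<Rightarrow> (nat \<Rightarrow> int) list \<Rightarrow> nat set \<Rightarrow> (nat \<Rightarrow> int) set" where
  "torsion l A S = {x \<in> zvec l. \<exists>k::int. k > 0 \<and> (\<lambda>i. k * x i) \<in> lattice A S}"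

text \<open>Congruence modulo <S> on the torsion preimage; its classes form (\<int>^l/<S>)_tor.\<close>
definition tor_rel :: "nat \<Rightarrow> (nat \<Rightarrow> int) list \<Rightarrow> nat set \<Rightarrow> ((nat \<Rightarrow> int) \<times> (nat \<Rightarrow> int)) set" where
  "tor_rel l A S = {(x, y). x \<in> torsion l A S \<and> y \<in> torsion l A S \<and> (\<lambda>i. x i - y i) \<in> lattice A S}"

definition m_arith :: "nat \<Rightarrow> (nat \<Rightarrow> int) list \<Rightarrow> nat set \<Rightarrow> nat" where
  "m_arith l A S = card (torsion l A S // tor_rel l A S)"

text \<open>m(S; \<complex>^\<times>) = #Hom((\<int>^l/<S>)_tor, \<complex>^\<times>), realised as homomorphisms from the torsion
  preimage into \<complex>^\<times> that are trivial on <S> (universal property of the quotient);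
  functions are normalised to 1 outside the torsion preimage.\<close>
definition m_Cstar :: "nat \<Rightarrow> (nat \<Rightarrow> int) list \<Rightarrow> nat set \<Rightarrow> nat" where
  "m_Cstar l A S = card {\<phi> :: (nat \<Rightarrow> int) \<Rightarrow> complex.
      (\<forall>x\<in>torsion l A S. \<phi> x \<noteq> 0) \<and>
      (\<forall>x\<in>torsion l A S. \<forall>y\<in>torsion l A S. \<phi> (\<lambda>i. x i + y i) = \<phi> x * \<phi> y) \<and>
      (\<forall>x\<in>lattice A S. \<phi> x = 1) \<and>
      (\<forall>x. x \<notin> torsion l A S \<longrightarrow> \<phi> x = 1)}"

text \<open>Largest elementary divisor of (\<int>^l/<S>)_tor = its exponent.\<close>
definition max_div :: "nat \<Rightarrow> (nat \<Rightarrow> int) list \<Rightarrow> nat set \<Rightarrow> nat" where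
  "max_div l A S = (LEAST n::nat. n > 0 \<and> (\<forall>x\<in>torsion l A S. (\<lambda>i. int n * x i) \<in> lattice A S))"

definition rho :: "nat \<Rightarrow> (nat \<Rightarrow> int) list \<Rightarrow> nat" where
  "rho l A = Lcm ((\<lambda>S. max_div l A S) ` Pow {..<length A})"

definition char_qp :: "nat \<Rightarrow> (nat \<Rightarrow> int) list \<Rightarrow> nat \<Rightarrow> nat" where
  "char_qp l A q = card {x \<in> {..<l} \<rightarrow>\<^sub>E {..<q}.
      \<forall>\<alpha>\<in>set A. (\<Sum>i<l. \<alpha> i * int (x i)) mod int q \<noteq> 0}"

definition chi_Cstar :: "nat \<Rightarrow> (nat \<Rightarrow> int) list \<Rightarrow> int poly" where
  "chi_Cstar l A = (\<Sum>S\<in>Pow {..<length A}.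
      smult ((-1) ^ card S * int (m_Cstar l A S)) (monom 1 (l - rankS A S)))"

definition chi_arith :: "nat \<Rightarrow> (nat \<Rightarrow> int) list \<Rightarrow> int poly" where
  "chi_arith l A = (\<Sum>S\<in>Pow {..<length A}.
      smult ((-1) ^ card S * int (m_arith l A S)) (monom 1 (l - rankS A S)))"

end

theory Submission
  imports Defs
begin

text \<open>
  Fix a sublist \<open>S\<close>, let \<open>T \<subseteq> \<int>\<^sup>l\<close> be the preimage of the torsion subgroup of \<open>\<int>\<^sup>l/\<langle>S\<rangle>\<close> and
  choose a \<open>\<int>\<close>-basis \<open>b\<^sub>1, \<dots>, b\<^sub>k\<close> of \<open>T\<close>; then \<open>k = r\<^sub>S\<close>. In these coordinates \<open>\<langle>S\<rangle>\<close> becomes a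
  subgroup \<open>M \<subseteq> \<int>\<^sup>k\<close>, and \<open>q\<int>\<^sup>k \<subseteq> M\<close> as soon as the exponent of \<open>T/\<langle>S\<rangle>\<close> divides \<open>q\<close>. Hence
  \<open>m(S) = #(\<int>\<^sup>k/M) = q\<^sup>k / #(M mod q)\<close>, and a homomorphism \<open>T/\<langle>S\<rangle> \<rightarrow> \<complex>\<^sup>\<times>\<close> is determined by
  its values \<open>e(y\<^sub>j/q)\<close> on the basis (\<open>e(t) = exp(2\<pi>it)\<close>), the admissible \<open>y \<in> (\<int>/q\<int>)\<^sup>k\<close> being the annihilator of
  \<open>M mod q\<close>, again of size \<open>q\<^sup>k / #(M mod q)\<close> by orthogonality of the characters
  \<open>x \<mapsto> e(h\<cdot>x/q)\<close>. The same orthogonality counts the \<open>x \<in> (\<int>/q\<int>)\<^sup>l\<close> with \<open>\<alpha>(x) = 0\<close> for all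
  \<open>\<alpha> \<in> S\<close> as \<open>q\<^sup>l / #(\<langle>S\<rangle> mod q) = q\<^sup>l\<^sup>-\<^sup>k m(S)\<close>, and inclusion-exclusion over the sublists
  gives the characteristic quasi-polynomial whenever \<open>\<rho>\<^sub>\<A> | q\<close>.
\<close>

section \<open>Roots of unity\<close>

definition unit_root :: "int \<Rightarrow> int \<Rightarrow> complex" where
  "unit_root q a = cis (2 * pi * of_int a / of_int q)"

lemma unit_root_add: "unit_root q (a + b) = unit_root q a * unit_root q b"
  unfolding unit_root_def by (simp add: cis_mult add_divide_distrib distrib_left)

lemma unit_root_0 [simp]: "unit_root q 0 = 1"
  by (simp add: unit_root_def)

lemma unit_root_nonzero [simp]: "unit_root q a \<noteq> 0"
  by (simp add: unit_root_def)

lemma unit_root_power: "unit_root q a ^ n = unit_root q (int n * a)"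
  by (induction n) (auto simp: unit_root_add distrib_right)

lemma unit_root_eq_1_iff:
  assumes "q > 0"
  shows "unit_root q a = 1 \<longleftrightarrow> q dvd a"
proof
  assume "unit_root q a = 1"
  then have "cos (2 * pi * of_int a / of_int q) = 1"
    unfolding unit_root_def by (metis cis.sel(1) one_complex.sel(1))
  then obtain n :: int where "2 * pi * of_int a / of_int q = of_int n * 2 * pi"
    by (auto simp: cos_one_2pi_int)
  with assms have "real_of_int a = of_int (n * q)"
    by (simp add: field_simps)
  then show "q dvd a"
    by (simp only: of_int_eq_iff) simp
next
  assume "q dvd a"
  then obtain n where "a = q * n" ..
  with assms have "2 * pi * of_int a / of_int q = 2 * pi * of_int n"
    by (simp add: field_simps)
  then show "unit_root q a = 1"
    unfolding unit_root_def by (simp add: cis_multiple_2pi)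
qed

lemma unit_root_eq_iff:
  assumes "q > 0"
  shows "unit_root q a = unit_root q b \<longleftrightarrow> q dvd (a - b)"
proof -
  have "unit_root q a = unit_root q (a - b) * unit_root q b"
    by (simp flip: unit_root_add)
  then show ?thesis
    using unit_root_eq_1_iff[OF assms, of "a - b"] by auto
qed

lemma unit_root_cong:
  assumes "q > 0" "a mod q = b mod q"
  shows "unit_root q a = unit_root q b"
  using assms by (simp add: unit_root_eq_iff mod_eq_dvd_iff)

lemma root_of_unity_is_unit_root:
  assumes "q > 0" "(z :: complex) ^ nat q = 1"
  obtains a where "0 \<le> a" "a < q" "z = unit_root q a"
proof -
  from assms(1) have "nat q > 0" by simp
  from bij_betw_roots_unity[OF this] assms(2)
  obtain m where "m < nat q" "z = cis (2 * pi * real m / real (nat q))"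
    by (auto simp: bij_betw_def)
  with assms(1) show thesis
    by (intro that[of "int m"]) (auto simp: unit_root_def)
qed

definition dot :: "nat \<Rightarrow> (nat \<Rightarrow> int) \<Rightarrow> (nat \<Rightarrow> int) \<Rightarrow> int" where
  "dot n v x = (\<Sum>i<n. v i * x i)"

definition vec_mod :: "int \<Rightarrow> (nat \<Rightarrow> int) \<Rightarrow> nat \<Rightarrow> int" where
  "vec_mod q v = (\<lambda>i. v i mod q)"

definition residue_box :: "nat \<Rightarrow> int \<Rightarrow> (nat \<Rightarrow> int) set" where
  "residue_box n q = {x. (\<forall>i<n. 0 \<le> x i \<and> x i < q) \<and> (\<forall>i\<ge>n. x i = 0)}"

lemma bij_betw_PiE_residue_box:
  "bij_betw (\<lambda>x i. if i < n then int (x i) else 0) ({..<n} \<rightarrow>\<^sub>E {..<Q}) (residue_box n (int Q))"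
proof (rule bij_betw_byWitness[where f' = "\<lambda>y i. if i < n then nat (y i) else undefined"])
  show "\<forall>x\<in>{..<n} \<rightarrow>\<^sub>E {..<Q}. (\<lambda>i. if i < n then nat (if i < n then int (x i) else 0) else undefined) = x"
    by (auto simp: PiE_def extensional_def fun_eq_iff)
  show "\<forall>y\<in>residue_box n (int Q). (\<lambda>i. if i < n then int (if i < n then nat (y i) else undefined) else 0) = y"
    by (auto simp: residue_box_def fun_eq_iff not_less)
qed (auto simp: residue_box_def PiE_def Pi_def extensional_def)

lemma card_residue_box:
  assumes "q > 0"
  shows "card (residue_box n q) = nat q ^ n"
  using bij_betw_same_card[OF bij_betw_PiE_residue_box[of n "nat q"]] assms
  by (simp add: card_PiE)

lemma finite_residue_box:
  assumes "q > 0"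
  shows "finite (residue_box n q)"
  using card_residue_box[OF assms, of n] assms card_gt_0_iff by fastforce

lemma residue_box_subset_zvec: "residue_box n q \<subseteq> zvec n"
  by (auto simp: residue_box_def zvec_def)

lemma vec_mod_in_residue_box: "v \<in> zvec n \<Longrightarrow> q > 0 \<Longrightarrow> vec_mod q v \<in> residue_box n q"
  by (auto simp: residue_box_def zvec_def vec_mod_def)

lemma vec_mod_residue_box:
  assumes "x \<in> residue_box n q"
  shows "vec_mod q x = x"
  unfolding vec_mod_def fun_eq_iff
proof
  fix i
  show "x i mod q = x i"
    using assms by (cases "i < n") (auto simp: residue_box_def)
qed

lemma vec_mod_eq_iff: "vec_mod q a = vec_mod q b \<longleftrightarrow> (\<forall>i. q dvd (a i - b i))"
  unfolding vec_mod_def fun_eq_iff by (simp add: mod_eq_dvd_iff)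

lemma zvec_diff: "a \<in> zvec n \<Longrightarrow> b \<in> zvec n \<Longrightarrow> (\<lambda>i. a i - b i) \<in> zvec n"
  unfolding zvec_def by auto

lemma dot_add_left: "dot n (\<lambda>i. x i + y i) h = dot n x h + dot n y h"
  unfolding dot_def by (simp add: distrib_right sum.distrib)

lemma dot_add_right: "dot n h (\<lambda>i. x i + y i) = dot n h x + dot n h y"
  unfolding dot_def by (simp add: distrib_left sum.distrib)

lemma dot_vec_mod_left: "dot n (vec_mod q h) y mod q = dot n h y mod q"
proof -
  have "(\<Sum>i<n. h i mod q * y i) mod q = (\<Sum>i<n. (h i mod q * y i) mod q) mod q"
    by (rule mod_sum_eq[symmetric])
  also have "\<dots> = (\<Sum>i<n. h i * y i) mod q"
    by (simp only: mod_mult_left_eq mod_sum_eq)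
  finally show ?thesis
    unfolding dot_def vec_mod_def .
qed

lemma dot_vec_mod_right: "dot n h (vec_mod q y) mod q = dot n h y mod q"
proof -
  have "(\<Sum>i<n. h i * (y i mod q)) mod q = (\<Sum>i<n. (h i * (y i mod q)) mod q) mod q"
    by (rule mod_sum_eq[symmetric])
  also have "\<dots> = (\<Sum>i<n. h i * y i) mod q"
    by (simp only: mod_mult_right_eq mod_sum_eq)
  finally show ?thesis
    unfolding dot_def vec_mod_def .
qed

lemma inj_on_vec_mod_shift: "inj_on (\<lambda>x. vec_mod q (\<lambda>i. x i + a i)) (residue_box n q)"
proof (rule inj_onI)
  fix x y
  assume "x \<in> residue_box n q" "y \<in> residue_box n q"
    and "vec_mod q (\<lambda>i. x i + a i) = vec_mod q (\<lambda>i. y i + a i)"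
  then show "x = y"
    by (metis (no_types, lifting) vec_mod_eq_iff vec_mod_residue_box add_diff_cancel_right)
qed

section \<open>Subgroups of \<open>\<int>\<^sup>n\<close> and character sums\<close>

definition zsubgroup :: "(nat \<Rightarrow> int) set \<Rightarrow> bool" where
  "zsubgroup G \<longleftrightarrow> (\<lambda>i. 0) \<in> G \<and> (\<forall>x\<in>G. \<forall>y\<in>G. (\<lambda>i. x i + y i) \<in> G) \<and> (\<forall>x\<in>G. (\<lambda>i. - x i) \<in> G)"

lemma zsubgroup_zero: "zsubgroup G \<Longrightarrow> (\<lambda>i. 0) \<in> G"
  by (simp add: zsubgroup_def)

lemma zsubgroup_add: "zsubgroup G \<Longrightarrow> x \<in> G \<Longrightarrow> y \<in> G \<Longrightarrow> (\<lambda>i. x i + y i) \<in> G"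
  by (simp add: zsubgroup_def)

lemma zsubgroup_uminus: "zsubgroup G \<Longrightarrow> x \<in> G \<Longrightarrow> (\<lambda>i. - x i) \<in> G"
  by (simp add: zsubgroup_def)

lemma zsubgroup_diff: "zsubgroup G \<Longrightarrow> x \<in> G \<Longrightarrow> y \<in> G \<Longrightarrow> (\<lambda>i. x i - y i) \<in> G"
  using zsubgroup_add[of G x "\<lambda>i. - y i"] zsubgroup_uminus[of G y] by simp

lemma zsubgroup_smult_nat: "zsubgroup G \<Longrightarrow> x \<in> G \<Longrightarrow> (\<lambda>i. int k * x i) \<in> G"
proof (induction k)
  case 0
  then show ?case by (simp add: zsubgroup_zero)
next
  case (Suc k)
  then have "(\<lambda>i. int k * x i + x i) \<in> G"
    using zsubgroup_add by blast
  then show ?case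
    by (simp add: distrib_right add.commute)
qed

lemma zsubgroup_smult:
  assumes "zsubgroup G" "x \<in> G"
  shows "(\<lambda>i. c * x i) \<in> G"
proof (cases "c \<ge> 0")
  case True
  then show ?thesis
    using zsubgroup_smult_nat[OF assms, of "nat c"] by simp
next
  case False
  have "(\<lambda>i. - (int (nat (- c)) * x i)) \<in> G"
    using zsubgroup_uminus[OF assms(1) zsubgroup_smult_nat[OF assms]] .
  with False show ?thesis
    by simp
qed

lemma zsubgroup_sum:
  assumes "zsubgroup G" "finite J" "\<And>j. j \<in> J \<Longrightarrow> f j \<in> G"
  shows "(\<lambda>i. \<Sum>j\<in>J. f j i) \<in> G"
  using assms(2,3)
proof (induction J rule: finite_induct)
  case empty
  then show ?case using zsubgroup_zero[OF assms(1)] by simp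
next
  case (insert a J)
  then have "(\<lambda>i. f a i + (\<Sum>j\<in>J. f j i)) \<in> G"
    using zsubgroup_add[OF assms(1)] by blast
  with insert show ?case
    by simp
qed

lemma zsubgroup_lincomb:
  assumes "zsubgroup G" "finite J" "\<And>j. j \<in> J \<Longrightarrow> f j \<in> G"
  shows "(\<lambda>i. \<Sum>j\<in>J. c j * f j i) \<in> G"
  using assms by (intro zsubgroup_sum zsubgroup_smult)

lemma sum_eq_0_if_reindex_scales:
  assumes "finite X" "\<sigma> ` X \<subseteq> X" "inj_on \<sigma> X"
    and "\<And>x. x \<in> X \<Longrightarrow> f (\<sigma> x) = c * f x" "c \<noteq> (1 :: complex)"
  shows "sum f X = 0"
proof -
  have "\<sigma> ` X = X"
    using endo_inj_surj assms(1-3) by blast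
  then have "sum f X = sum (f \<circ> \<sigma>) X"
    using sum.reindex[OF assms(3), of f] by simp
  also have "\<dots> = c * sum f X"
    using assms(4) by (simp add: sum_distrib_left)
  finally have "(1 - c) * sum f X = 0"
    by (simp add: algebra_simps)
  with assms(5) show ?thesis
    by simp
qed

lemma unit_root_sum_residue_box:
  assumes q: "q > 0" and h: "h \<in> residue_box n q"
  shows "(\<Sum>x\<in>residue_box n q. unit_root q (dot n h x))
           = (if h = (\<lambda>i. 0) then of_nat (nat q ^ n) else 0)"
proof (cases "h = (\<lambda>i. 0)")
  case True
  then show ?thesis
    using card_residue_box[OF q] by (simp add: dot_def)
next
  case False
  then obtain j where j: "h j \<noteq> 0" by auto
  have jn: "j < n"
  proof (rule ccontr)
    assume "\<not> j < n"
    with h have "h j = 0" by (simp add: residue_box_def)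
    with j show False by simp
  qed
  with h j have hj: "0 < h j" "h j < q"
    by (auto simp: residue_box_def order_le_less)
  define e where "e = (\<lambda>i. if i = j then 1 else (0 :: int))"
  let ?B = "residue_box n q"
  let ?\<sigma> = "\<lambda>x. vec_mod q (\<lambda>i. x i + e i)"
  have "dot n h e = h j"
    unfolding dot_def e_def using jn
    by (simp add: if_distrib[of "\<lambda>t. h _ * t"] sum.delta cong: if_cong)
  then have shift: "unit_root q (dot n h (?\<sigma> x)) = unit_root q (h j) * unit_root q (dot n h x)" for x
    using unit_root_cong[OF q dot_vec_mod_right] by (simp add: dot_add_right unit_root_add mult.commute)
  have "(\<lambda>i. x i + e i) \<in> zvec n" if "x \<in> ?B" for x
    using that jn by (auto simp: residue_box_def zvec_def e_def)
  then have "?\<sigma> ` ?B \<subseteq> ?B"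
    using vec_mod_in_residue_box q by blast
  moreover have "unit_root q (h j) \<noteq> 1"
    using hj unit_root_eq_1_iff[OF q] zdvd_not_zless by simp
  moreover have "inj_on ?\<sigma> ?B"
    by (rule inj_on_vec_mod_shift)
  ultimately have "(\<Sum>x\<in>?B. unit_root q (dot n h x)) = 0"
    using finite_residue_box[OF q] shift by (intro sum_eq_0_if_reindex_scales) auto
  with False show ?thesis
    by simp
qed

lemma unit_root_sum_vec_mod_image:
  assumes q: "q > 0" and G: "zsubgroup G" "G \<subseteq> zvec n"
  defines "H \<equiv> vec_mod q ` G"
  shows "(\<Sum>h\<in>H. unit_root q (dot n h x))
           = (if \<forall>h\<in>H. q dvd dot n h x then of_nat (card H) else 0)"
proof (cases "\<forall>h\<in>H. q dvd dot n h x")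
  case True
  then have "(\<Sum>h\<in>H. unit_root q (dot n h x)) = (\<Sum>h\<in>H. 1)"
    using unit_root_eq_1_iff[OF q] by (intro sum.cong) auto
  with True show ?thesis
    by simp
next
  case False
  then obtain h0 where h0: "h0 \<in> H" "\<not> q dvd dot n h0 x" by blast
  let ?\<sigma> = "\<lambda>h. vec_mod q (\<lambda>i. h i + h0 i)"
  have H_box: "H \<subseteq> residue_box n q"
    using G(2) vec_mod_in_residue_box q unfolding H_def by blast
  have "?\<sigma> ` H \<subseteq> H"
  proof
    fix y assume "y \<in> ?\<sigma> ` H"
    then obtain v w where "v \<in> G" "w \<in> G" "y = ?\<sigma> (vec_mod q v)" "h0 = vec_mod q w"
      using h0(1) unfolding H_def by blast
    then have "y = vec_mod q (\<lambda>i. v i + w i)"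
      by (simp add: vec_mod_def mod_add_eq)
    with \<open>v \<in> G\<close> \<open>w \<in> G\<close> show "y \<in> H"
      unfolding H_def using zsubgroup_add[OF G(1)] by blast
  qed
  moreover have "unit_root q (dot n (?\<sigma> h) x) = unit_root q (dot n h0 x) * unit_root q (dot n h x)" for h
    using unit_root_cong[OF q dot_vec_mod_left] by (simp add: dot_add_left unit_root_add mult.commute)
  moreover have "finite H"
    using H_box finite_residue_box[OF q] finite_subset by blast
  moreover have "inj_on ?\<sigma> H"
    using inj_on_vec_mod_shift H_box by (rule inj_on_subset)
  moreover have "unit_root q (dot n h0 x) \<noteq> 1"
    using h0(2) unit_root_eq_1_iff[OF q] by simp
  ultimately have "(\<Sum>h\<in>H. unit_root q (dot n h x)) = 0"
    by (intro sum_eq_0_if_reindex_scales) auto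
  with False show ?thesis
    by (simp only: if_False)
qed

definition annihilator :: "nat \<Rightarrow> int \<Rightarrow> (nat \<Rightarrow> int) set \<Rightarrow> (nat \<Rightarrow> int) set" where
  "annihilator n q G = {x \<in> residue_box n q. \<forall>v\<in>G. q dvd dot n v x}"

text \<open>Both sides of the double sum \<open>\<Sum>x \<Sum>h e(h \<cdot> x / q)\<close>, with \<open>h\<close> over \<open>G mod q\<close> and \<open>x\<close> over
  \<open>(\<int>/q\<int>)\<^sup>n\<close>, are evaluated by orthogonality of characters.\<close>

theorem card_annihilator_mult_card_vec_mod_image:
  assumes q: "q > 0" and G: "zsubgroup G" "G \<subseteq> zvec n"
  shows "card (annihilator n q G) * card (vec_mod q ` G) = nat q ^ n"
proof -
  define H where "H = vec_mod q ` G"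
  define B where "B = residue_box n q"
  define N where "N = {x \<in> B. \<forall>h\<in>H. q dvd dot n h x}"
  have H_box: "H \<subseteq> B"
    using G(2) vec_mod_in_residue_box q unfolding H_def B_def by blast
  have fin_B: "finite B"
    unfolding B_def using q by (rule finite_residue_box)
  with H_box have fin_H: "finite H"
    by (rule finite_subset)
  have zero_H: "(\<lambda>i. 0) \<in> H"
    using zsubgroup_zero[OF G(1)] unfolding H_def by (force simp: vec_mod_def)
  have "(\<Sum>x\<in>B. \<Sum>h\<in>H. unit_root q (dot n h x))
          = (\<Sum>x\<in>B. if \<forall>h\<in>H. q dvd dot n h x then of_nat (card H) else 0)"
    using unit_root_sum_vec_mod_image[OF q G] unfolding H_def by (rule sum.cong[OF refl])
  also have "\<dots> = of_nat (card N * card H)"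
    unfolding N_def by (simp add: sum.inter_filter[OF fin_B, symmetric])
  finally have "of_nat (card N * card H) = (\<Sum>h\<in>H. \<Sum>x\<in>B. unit_root q (dot n h x))"
    by (simp only: sum.swap[of _ B])
  also have "\<dots> = (\<Sum>h\<in>H. if h = (\<lambda>i. 0) then of_nat (nat q ^ n) else 0)"
    using unit_root_sum_residue_box[OF q] H_box unfolding B_def by (intro sum.cong) auto
  also have "\<dots> = of_nat (nat q ^ n)"
    using fin_H zero_H by (simp add: sum.delta)
  finally have "card N * card H = nat q ^ n"
    by (simp only: of_nat_eq_iff)
  moreover have "N = annihilator n q G"
    unfolding N_def annihilator_def B_def H_def
    using dot_vec_mod_left[of n q] by (auto simp: dvd_eq_mod_eq_0)
  ultimately show ?thesis
    unfolding H_def by simp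
qed

section \<open>Bases of subgroups of \<open>\<int>\<^sup>n\<close>\<close>

definition lincomb :: "(nat \<Rightarrow> int) list \<Rightarrow> (nat \<Rightarrow> int) \<Rightarrow> nat \<Rightarrow> int" where
  "lincomb bs c = (\<lambda>i. \<Sum>j<length bs. c j * (bs ! j) i)"

definition zindep :: "(nat \<Rightarrow> int) list \<Rightarrow> bool" where
  "zindep bs \<longleftrightarrow> (\<forall>c. lincomb bs c = (\<lambda>i. 0) \<longrightarrow> (\<forall>j<length bs. c j = 0))"

lemma lincomb_in_zsubgroup: "zsubgroup G \<Longrightarrow> set bs \<subseteq> G \<Longrightarrow> lincomb bs c \<in> G"
  unfolding lincomb_def by (rule zsubgroup_lincomb) auto

lemma lincomb_cong: "(\<And>j. j < length bs \<Longrightarrow> c j = c' j) \<Longrightarrow> lincomb bs c = lincomb bs c'"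
  unfolding lincomb_def by auto

lemma lincomb_snoc: "lincomb (bs @ [g]) c = (\<lambda>i. lincomb bs c i + c (length bs) * g i)"
  unfolding lincomb_def by (auto simp: nth_append intro!: sum.cong)

lemma lincomb_add: "lincomb bs (\<lambda>j. a j + b j) = (\<lambda>i. lincomb bs a i + lincomb bs b i)"
  unfolding lincomb_def by (simp add: distrib_right sum.distrib)

lemma lincomb_diff: "lincomb bs (\<lambda>j. a j - b j) = (\<lambda>i. lincomb bs a i - lincomb bs b i)"
  unfolding lincomb_def by (simp add: left_diff_distrib sum_subtractf)

lemma lincomb_smult: "lincomb bs (\<lambda>j. s * a j) = (\<lambda>i. s * lincomb bs a i)"
  unfolding lincomb_def by (simp add: sum_distrib_left mult.assoc)

lemma lincomb_zero [simp]: "lincomb bs (\<lambda>j. 0) = (\<lambda>i. 0)"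
  by (simp add: lincomb_def)

lemma lincomb_unit_vector:
  "j < length bs \<Longrightarrow> lincomb bs (\<lambda>i. if i = j then 1 else 0) = bs ! j"
  unfolding lincomb_def by (simp add: if_distrib[of "\<lambda>t. t * _"] sum.delta cong: if_cong)

lemma zvec_Suc_coordinate_0:
  assumes "x \<in> zvec (Suc n)" "x n = 0"
  shows "x \<in> zvec n"
  unfolding zvec_def mem_Collect_eq
proof (intro allI impI)
  fix i
  assume "n \<le> i"
  then have "i = n \<or> Suc n \<le> i"
    by linarith
  with assms show "x i = 0"
    unfolding zvec_def by auto
qed

lemma zsubgroup_coordinate_generator:
  assumes G: "zsubgroup G" and x0: "x0 \<in> G" "x0 n \<noteq> 0"
  obtains g where "g \<in> G" "g n > 0" "\<And>x. x \<in> G \<Longrightarrow> g n dvd x n"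
proof -
  define P where "P = (\<lambda>m :: nat. m > 0 \<and> (\<exists>x\<in>G. x n = int m))"
  have "(\<lambda>i. - x0 i) \<in> G"
    using zsubgroup_uminus[OF G x0(1)] .
  with x0 have "\<exists>x\<in>G. x n = int (nat \<bar>x0 n\<bar>)"
    by (cases "x0 n > 0") (auto intro: bexI[of _ x0] bexI[of _ "\<lambda>i. - x0 i"])
  with x0(2) have "P (nat \<bar>x0 n\<bar>)"
    unfolding P_def by simp
  then have P_least: "P (LEAST m. P m)"
    by (rule LeastI)
  then obtain g where g: "g \<in> G" "g n = int (LEAST m. P m)" "g n > 0"
    unfolding P_def by auto
  have "g n dvd x n" if x: "x \<in> G" for x
  proof (rule ccontr)
    assume "\<not> g n dvd x n"
    moreover have "0 \<le> x n mod g n" "x n mod g n < g n"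
      using g(3) by simp_all
    ultimately have r: "0 < x n mod g n" "x n mod g n < g n"
      by (simp_all add: dvd_eq_mod_eq_0 order_le_less)
    have "(\<lambda>i. x i - (x n div g n) * g i) \<in> G"
      using zsubgroup_diff[OF G x zsubgroup_smult[OF G g(1)]] .
    moreover have "x n - (x n div g n) * g n = x n mod g n"
      by (simp add: minus_div_mult_eq_mod)
    ultimately have "\<exists>y\<in>G. y n = int (nat (x n mod g n))"
      using r by auto
    with r have "P (nat (x n mod g n))"
      unfolding P_def by simp
    then have "(LEAST m. P m) \<le> nat (x n mod g n)"
      by (rule Least_le)
    with g(2) r show False
      by linarith
  qed
  with g show thesis
    using that by blast
qed

lemma zindep_snoc:
  assumes "zindep bs" "\<And>c. lincomb bs c n = 0" "g n \<noteq> 0"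
  shows "zindep (bs @ [g])"
  unfolding zindep_def
proof (rule allI, rule impI)
  fix c
  assume c: "lincomb (bs @ [g]) c = (\<lambda>i. 0)"
  then have "c (length bs) * g n = 0"
    using fun_cong[OF c, of n] assms(2) unfolding lincomb_snoc by simp
  with assms(3) have last: "c (length bs) = 0"
    by simp
  with c have "lincomb bs c = (\<lambda>i. 0)"
    unfolding lincomb_snoc by (simp add: fun_eq_iff)
  with assms(1) last show "\<forall>j<length (bs @ [g]). c j = 0"
    unfolding zindep_def by (auto simp: less_Suc_eq)
qed

lemma subset_range_lincomb_snoc:
  assumes G: "zsubgroup G" and g: "g \<in> G" "\<And>x. x \<in> G \<Longrightarrow> g n dvd x n"
    and bs: "{x \<in> G. x n = 0} \<subseteq> range (lincomb bs)"
  shows "G \<subseteq> range (lincomb (bs @ [g]))"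
proof
  fix x
  assume x: "x \<in> G"
  define y where "y = (\<lambda>i. x i - (x n div g n) * g i)"
  have "y \<in> G" "y n = 0"
    using zsubgroup_diff[OF G x zsubgroup_smult[OF G g(1)]] g(2)[OF x] unfolding y_def by simp_all
  with bs obtain c where c: "y = lincomb bs c"
    by auto
  have "lincomb bs (c(length bs := x n div g n)) = lincomb bs c"
    by (rule lincomb_cong) simp
  then have "lincomb (bs @ [g]) (c(length bs := x n div g n)) = (\<lambda>i. y i + (x n div g n) * g i)"
    unfolding lincomb_snoc c by simp
  also have "\<dots> = x"
    unfolding y_def by simp
  finally show "x \<in> range (lincomb (bs @ [g]))"
    by (metis rangeI)
qed

lemma zsubgroup_has_basis:
  "zsubgroup G \<Longrightarrow> G \<subseteq> zvec n \<Longrightarrow>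
     \<exists>bs. length bs \<le> n \<and> set bs \<subseteq> G \<and> zindep bs \<and> G = range (lincomb bs)"
proof (induction n arbitrary: G)
  case 0
  then have "G = {\<lambda>i. 0}"
    using zsubgroup_zero by (auto simp: zvec_def)
  then show ?case
    by (intro exI[of _ "[]"]) (auto simp: zindep_def lincomb_def)
next
  case (Suc n)
  define G' where "G' = {x \<in> G. x n = 0}"
  have "zsubgroup G'"
    using Suc.prems(1) unfolding G'_def zsubgroup_def by auto
  moreover have "G' \<subseteq> zvec n"
    using Suc.prems(2) zvec_Suc_coordinate_0 unfolding G'_def by blast
  ultimately obtain bs where bs: "length bs \<le> n" "set bs \<subseteq> G'" "zindep bs" "G' = range (lincomb bs)"
    using Suc.IH by blast
  show ?case
  proof (cases "\<forall>x\<in>G. x n = 0")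
    case True
    then have "G = G'"
      unfolding G'_def by auto
    with bs show ?thesis
      by (intro exI[of _ bs]) auto
  next
    case False
    then obtain g where g: "g \<in> G" "g n > 0" "\<And>x. x \<in> G \<Longrightarrow> g n dvd x n"
      using zsubgroup_coordinate_generator[OF Suc.prems(1)] by blast
    have "lincomb bs c n = 0" for c
      using bs(2) unfolding lincomb_def G'_def by (auto intro!: sum.neutral dest!: nth_mem)
    with bs(3) g(2) have "zindep (bs @ [g])"
      by (intro zindep_snoc) auto
    moreover have "G \<subseteq> range (lincomb (bs @ [g]))"
      using Suc.prems(1) g(1,3) bs(4) unfolding G'_def by (intro subset_range_lincomb_snoc) auto
    moreover have "set (bs @ [g]) \<subseteq> G"
      using bs(2) g(1) unfolding G'_def by auto
    moreover from this have "range (lincomb (bs @ [g])) \<subseteq> G"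
      using lincomb_in_zsubgroup[OF Suc.prems(1)] by blast
    ultimately show ?thesis
      using bs(1) by (intro exI[of _ "bs @ [g]"]) auto
  qed
qed

text \<open>Induction on \<open>k\<close>: the last coordinate is eliminated against a vector on which it does
  not vanish.\<close>

lemma zvec_linear_dependence:
  "finite I \<Longrightarrow> f ` I \<subseteq> zvec k \<Longrightarrow> card I > k \<Longrightarrow>
    \<exists>d. (\<exists>i\<in>I. d i \<noteq> 0) \<and> (\<lambda>t. \<Sum>i\<in>I. d i * f i t) = (\<lambda>t. 0)"
proof (induction k arbitrary: I f)
  case 0
  then obtain i0 where i0: "i0 \<in> I"
    by fastforce
  have "f i t = 0" if "i \<in> I" for i t
    using 0 that by (auto simp: zvec_def)
  with i0 show ?case
    by (intro exI[of _ "\<lambda>i. if i = i0 then 1 else 0"]) (auto simp: fun_eq_iff)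
next
  case (Suc k)
  show ?case
  proof (cases "\<forall>i\<in>I. f i k = 0")
    case True
    then have "f ` I \<subseteq> zvec k"
      using Suc.prems(2) zvec_Suc_coordinate_0 by blast
    with Suc.IH[of I f] Suc.prems show ?thesis
      by auto
  next
    case False
    then obtain i0 where i0: "i0 \<in> I" "f i0 k \<noteq> 0"
      by auto
    define a where "a = f i0 k"
    define I' where "I' = I - {i0}"
    define g where "g = (\<lambda>i t. a * f i t - f i k * f i0 t)"
    have fin': "finite I'" and card': "card I' > k"
      using Suc.prems i0 unfolding I'_def by (simp_all add: card_Diff_singleton)
    have "g i \<in> zvec k" if "i \<in> I'" for i
    proof (rule zvec_Suc_coordinate_0)
      have "f i \<in> zvec (Suc k)" "f i0 \<in> zvec (Suc k)"
        using Suc.prems(2) that i0(1) unfolding I'_def by auto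
      then show "g i \<in> zvec (Suc k)"
        unfolding g_def zvec_def by auto
    qed (simp add: g_def a_def)
    then obtain d' where d': "\<exists>i\<in>I'. d' i \<noteq> 0" "(\<lambda>t. \<Sum>i\<in>I'. d' i * g i t) = (\<lambda>t. 0)"
      using Suc.IH[OF fin' _ card'] by blast
    define d where "d = (\<lambda>i. if i = i0 then - (\<Sum>j\<in>I'. d' j * f j k) else a * d' i)"
    have I: "I = insert i0 I'" "i0 \<notin> I'"
      using i0 unfolding I'_def by auto
    have "(\<Sum>i\<in>I. d i * f i t) = 0" for t
    proof -
      have "(\<Sum>i\<in>I. d i * f i t) = d i0 * f i0 t + (\<Sum>i\<in>I'. d i * f i t)"
        unfolding I(1) using fin' I(2) by (rule sum.insert)
      also have "(\<Sum>i\<in>I'. d i * f i t) = (\<Sum>i\<in>I'. a * d' i * f i t)"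
        using I(2) by (intro sum.cong) (auto simp: d_def)
      also have "d i0 * f i0 t + (\<Sum>i\<in>I'. a * d' i * f i t) = (\<Sum>i\<in>I'. d' i * g i t)"
        by (simp add: d_def g_def sum_distrib_right sum_distrib_left right_diff_distrib
            sum_subtractf algebra_simps)
      also have "\<dots> = 0"
        using fun_cong[OF d'(2), of t] by simp
      finally show ?thesis .
    qed
    moreover have "\<exists>i\<in>I. d i \<noteq> 0"
      using d'(1) i0 unfolding d_def a_def I'_def by auto
    ultimately show ?thesis
      by (intro exI[of _ d]) (auto simp: fun_eq_iff)
  qed
qed

lemma card_image_eq_if_same_fibres:
  assumes "\<And>a b. a \<in> X \<Longrightarrow> b \<in> X \<Longrightarrow> f a = f b \<longleftrightarrow> g a = g b"
  shows "card (f ` X) = card (g ` X)"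
proof -
  define h where "h = (\<lambda>y. g (inv_into X f y))"
  have h_f: "h (f a) = g a" if "a \<in> X" for a
    using assms[of "inv_into X f (f a)" a] that inv_into_into[of "f a" f X] f_inv_into_f[of "f a" f X]
    unfolding h_def by auto
  have "inj_on h (f ` X)"
    by (rule inj_onI) (auto simp: h_f assms)
  moreover have "h ` f ` X = g ` X"
    by (auto simp: h_f image_image)
  ultimately show ?thesis
    by (metis card_image)
qed

lemma card_preimage_bij_betw:
  assumes "bij_betw g X Y" "Y' \<subseteq> Y"
  shows "card {x \<in> X. g x \<in> Y'} = card Y'"
proof -
  have "inj_on g {x \<in> X. g x \<in> Y'}"
    using assms(1) unfolding bij_betw_def by (rule inj_on_subset[OF conjunct1]) auto
  moreover have "g ` {x \<in> X. g x \<in> Y'} = Y'"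
    using assms unfolding bij_betw_def by auto
  ultimately show ?thesis
    by (metis card_image)
qed

text \<open>The induced bijection of the quotients is \<open>R``{a} \<mapsto> R'``{g a}\<close>.\<close>

lemma card_quotient_eq_if_reflects:
  assumes R: "equiv X R" and R': "equiv Y R'" and g: "g ` X = Y"
    and rel: "\<And>a b. a \<in> X \<Longrightarrow> b \<in> X \<Longrightarrow> (a, b) \<in> R \<longleftrightarrow> (g a, g b) \<in> R'"
  shows "card (X // R) = card (Y // R')"
proof -
  have R_sub: "R \<subseteq> X \<times> X" and R'_sub: "R' \<subseteq> Y \<times> Y"
    using R R' by (simp_all add: equiv_def refl_on_def)
  have cls: "g ` (R``{a}) = R'``{g a}" if a: "a \<in> X" for a
  proof
    show "g ` (R``{a}) \<subseteq> R'``{g a}"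
      using rel[OF a] R_sub by blast
    show "R'``{g a} \<subseteq> g ` (R``{a})"
    proof
      fix c
      assume c: "c \<in> R'``{g a}"
      with R'_sub g obtain b where "b \<in> X" "c = g b"
        by blast
      with rel[OF a] c show "c \<in> g ` (R``{a})"
        by blast
    qed
  qed
  have "inj_on (\<lambda>Z. g ` Z) (X // R)"
  proof (rule inj_onI)
    fix Z1 Z2
    assume "Z1 \<in> X // R" "Z2 \<in> X // R" and eq: "g ` Z1 = g ` Z2"
    then obtain a b where ab: "a \<in> X" "Z1 = R``{a}" "b \<in> X" "Z2 = R``{b}"
      by (auto elim!: quotientE)
    with eq cls have "R'``{g a} = R'``{g b}"
      by simp
    with ab g have "(g a, g b) \<in> R'"
      using eq_equiv_class_iff[OF R'] by blast
    with ab show "Z1 = Z2"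
      using rel R by (simp add: equiv_class_eq)
  qed
  moreover have "(\<lambda>Z. g ` Z) ` (X // R) = Y // R'"
    using g cls by (auto simp: quotient_def image_iff)
  ultimately show ?thesis
    by (metis card_image)
qed

lemma card_quotient_mult_class_size:
  assumes "equiv X R" "finite X" "\<And>a. a \<in> X \<Longrightarrow> card (R``{a}) = c"
  shows "card (X // R) * c = card X"
proof -
  have "c * card (X // R) = card (\<Union>(X // R))"
  proof (rule card_partition)
    show "finite (X // R)"
      using assms(1,2) by (simp add: equiv_def refl_on_def finite_quotient)
    show "finite (\<Union>(X // R))"
      using assms(2) Union_quotient[OF assms(1)] by simp
    show "\<And>C. C \<in> X // R \<Longrightarrow> card C = c"
      using assms(3) by (auto elim: quotientE)
    show "\<And>C1 C2. C1 \<in> X // R \<Longrightarrow> C2 \<in> X // R \<Longrightarrow> C1 \<noteq> C2 \<Longrightarrow> C1 \<inter> C2 = {}"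
      using quotient_disj[OF assms(1)] by blast
  qed
  then show ?thesis
    using Union_quotient[OF assms(1)] by (simp add: mult.commute)
qed

lemma equiv_zsubgroup_congruence:
  assumes "zsubgroup G"
  shows "equiv X {(a, b). a \<in> X \<and> b \<in> X \<and> (\<lambda>i. a i - b i) \<in> G}"
proof (rule equivI)
  show "refl_on X {(a, b). a \<in> X \<and> b \<in> X \<and> (\<lambda>i. a i - b i) \<in> G}"
    using zsubgroup_zero[OF assms] by (auto simp: refl_on_def)
  show "sym {(a, b). a \<in> X \<and> b \<in> X \<and> (\<lambda>i. a i - b i) \<in> G}"
    using zsubgroup_uminus[OF assms] by (fastforce simp: sym_def)
  show "trans {(a, b). a \<in> X \<and> b \<in> X \<and> (\<lambda>i. a i - b i) \<in> G}"
    using zsubgroup_add[OF assms] by (fastforce simp: trans_def)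
qed auto

lemma lattice_zsubgroup: "zsubgroup (lattice A S)"
  unfolding zsubgroup_def lattice_def
proof (intro conjI ballI)
  show "(\<lambda>i. 0) \<in> {x. \<exists>c. x = (\<lambda>i. \<Sum>j\<in>S. c j * (A ! j) i)}"
    by (auto intro: exI[of _ "\<lambda>j. 0"])
next
  fix x y
  assume "x \<in> {x. \<exists>c. x = (\<lambda>i. \<Sum>j\<in>S. c j * (A ! j) i)}"
    "y \<in> {x. \<exists>c. x = (\<lambda>i. \<Sum>j\<in>S. c j * (A ! j) i)}"
  then obtain c d where "x = (\<lambda>i. \<Sum>j\<in>S. c j * (A ! j) i)" "y = (\<lambda>i. \<Sum>j\<in>S. d j * (A ! j) i)"
    by blast
  then have "(\<lambda>i. x i + y i) = (\<lambda>i. \<Sum>j\<in>S. (c j + d j) * (A ! j) i)"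
    by (simp add: distrib_right sum.distrib)
  then show "(\<lambda>i. x i + y i) \<in> {x. \<exists>c. x = (\<lambda>i. \<Sum>j\<in>S. c j * (A ! j) i)}"
    by (intro CollectI exI[of _ "\<lambda>j. c j + d j"])
next
  fix x
  assume "x \<in> {x. \<exists>c. x = (\<lambda>i. \<Sum>j\<in>S. c j * (A ! j) i)}"
  then obtain c where "x = (\<lambda>i. \<Sum>j\<in>S. c j * (A ! j) i)"
    by blast
  then have "(\<lambda>i. - x i) = (\<lambda>i. \<Sum>j\<in>S. (- c j) * (A ! j) i)"
    by (simp add: sum_negf)
  then show "(\<lambda>i. - x i) \<in> {x. \<exists>c. x = (\<lambda>i. \<Sum>j\<in>S. c j * (A ! j) i)}"
    by (intro CollectI exI[of _ "\<lambda>j. - c j"])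
qed

lemma lattice_subset_zvec:
  assumes "\<forall>\<alpha>\<in>set A. \<alpha> \<in> zvec l" "S \<subseteq> {..<length A}"
  shows "lattice A S \<subseteq> zvec l"
proof -
  have "(A ! j) i = 0" if "j \<in> S" "l \<le> i" for i j
    using assms that nth_mem[of j A] unfolding zvec_def by auto
  then show ?thesis
    unfolding lattice_def zvec_def by auto
qed

lemma generator_in_lattice:
  assumes "finite S" "j \<in> S"
  shows "A ! j \<in> lattice A S"
proof -
  have "(\<lambda>i. \<Sum>j'\<in>S. (if j' = j then 1 else 0) * (A ! j') i) = A ! j"
    using assms by (simp add: if_distrib[of "\<lambda>t. t * _"] sum.delta' cong: if_cong)
  then show ?thesis
    unfolding lattice_def by (intro CollectI exI[of _ "\<lambda>j'. if j' = j then 1 else 0"]) simp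
qed

lemma dot_lattice_dvd:
  assumes "v \<in> lattice A S" "\<forall>j\<in>S. q dvd dot l (A ! j) y"
  shows "q dvd dot l v y"
proof -
  obtain c where c: "v = (\<lambda>i. \<Sum>j\<in>S. c j * (A ! j) i)"
    using assms(1) unfolding lattice_def by blast
  have "dot l v y = (\<Sum>i<l. \<Sum>j\<in>S. c j * (A ! j) i * y i)"
    unfolding c dot_def by (simp add: sum_distrib_right)
  also have "\<dots> = (\<Sum>j\<in>S. c j * dot l (A ! j) y)"
    unfolding dot_def by (subst sum.swap) (simp add: sum_distrib_left mult.assoc)
  finally show ?thesis
    using assms(2) by (simp add: dvd_sum)
qed

lemma torsion_subset_zvec: "torsion l A S \<subseteq> zvec l"
  unfolding torsion_def by auto

lemma lattice_subset_torsion: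
  assumes "\<forall>\<alpha>\<in>set A. \<alpha> \<in> zvec l" "S \<subseteq> {..<length A}"
  shows "lattice A S \<subseteq> torsion l A S"
  using lattice_subset_zvec[OF assms] unfolding torsion_def
  by (auto intro: exI[of _ 1])

lemma torsion_zsubgroup:
  assumes "\<forall>\<alpha>\<in>set A. \<alpha> \<in> zvec l" "S \<subseteq> {..<length A}"
  shows "zsubgroup (torsion l A S)"
  unfolding zsubgroup_def
proof (intro conjI ballI)
  show "(\<lambda>i. 0) \<in> torsion l A S"
    using lattice_subset_torsion[OF assms] zsubgroup_zero[OF lattice_zsubgroup] by blast
next
  fix x y
  assume "x \<in> torsion l A S" "y \<in> torsion l A S"
  then obtain a b where ab: "a > 0" "(\<lambda>i. a * x i) \<in> lattice A S" "b > 0" "(\<lambda>i. b * y i) \<in> lattice A S"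
    and "x \<in> zvec l" "y \<in> zvec l"
    unfolding torsion_def by auto
  have "(\<lambda>i. b * (a * x i) + a * (b * y i)) \<in> lattice A S"
    using zsubgroup_add[OF lattice_zsubgroup zsubgroup_smult[OF lattice_zsubgroup ab(2)]
        zsubgroup_smult[OF lattice_zsubgroup ab(4)]] .
  then have "(\<lambda>i. (a * b) * (x i + y i)) \<in> lattice A S"
    by (simp add: algebra_simps)
  with ab \<open>x \<in> zvec l\<close> \<open>y \<in> zvec l\<close> show "(\<lambda>i. x i + y i) \<in> torsion l A S"
    unfolding torsion_def zvec_def by (auto intro!: exI[of _ "a * b"])
next
  fix x
  assume "x \<in> torsion l A S"
  then obtain a where "a > 0" "(\<lambda>i. a * x i) \<in> lattice A S" "x \<in> zvec l"
    unfolding torsion_def by auto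
  moreover have "(\<lambda>i. - (a * x i)) \<in> lattice A S"
    using zsubgroup_uminus[OF lattice_zsubgroup calculation(2)] .
  ultimately show "(\<lambda>i. - x i) \<in> torsion l A S"
    unfolding torsion_def zvec_def by (auto intro!: exI[of _ a])
qed

lemma torsion_saturated:
  assumes "w \<in> zvec l" "q > 0" "(\<lambda>i. q * w i) \<in> torsion l A S"
  shows "w \<in> torsion l A S"
proof -
  obtain a where "a > 0" "(\<lambda>i. a * (q * w i)) \<in> lattice A S"
    using assms(3) unfolding torsion_def by auto
  with assms(1,2) show ?thesis
    unfolding torsion_def by (auto simp: mult.assoc intro!: exI[of _ "a * q"])
qed

section \<open>Coordinates with respect to a basis of the torsion preimage\<close>

locale torsion_basis =
  fixes l :: nat and A :: "(nat \<Rightarrow> int) list" and S :: "nat set" and bs :: "(nat \<Rightarrow> int) list"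
  assumes vectors: "\<forall>\<alpha>\<in>set A. \<alpha> \<in> zvec l" and sublist: "S \<subseteq> {..<length A}"
    and basis_subset: "set bs \<subseteq> torsion l A S" and basis_indep: "zindep bs"
    and torsion_eq: "torsion l A S = range (lincomb bs)"
begin

abbreviation L :: "(nat \<Rightarrow> int) set" where "L \<equiv> lattice A S"
abbreviation T :: "(nat \<Rightarrow> int) set" where "T \<equiv> torsion l A S"
abbreviation k :: nat where "k \<equiv> length bs"

lemma L_zsubgroup: "zsubgroup L"
  by (rule lattice_zsubgroup)

lemma T_zsubgroup: "zsubgroup T"
  using vectors sublist by (rule torsion_zsubgroup)

lemma L_subset_T: "L \<subseteq> T"
  using vectors sublist by (rule lattice_subset_torsion)

lemma lincomb_in_T: "lincomb bs c \<in> T"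
  using torsion_eq by auto

lemma basis_vector_in_T: "j < k \<Longrightarrow> bs ! j \<in> T"
  using basis_subset by auto

lemma T_eq_lincomb_image: "T = lincomb bs ` zvec k"
proof
  show "T \<subseteq> lincomb bs ` zvec k"
  proof
    fix x
    assume "x \<in> T"
    then obtain c where "x = lincomb bs c"
      using torsion_eq by auto
    also have "\<dots> = lincomb bs (\<lambda>j. if j < k then c j else 0)"
      by (rule lincomb_cong) simp
    finally show "x \<in> lincomb bs ` zvec k"
      by (auto simp: zvec_def)
  qed
qed (use torsion_eq in auto)

lemma inj_on_lincomb: "inj_on (lincomb bs) (zvec k)"
proof (rule inj_onI)
  fix a b
  assume ab: "a \<in> zvec k" "b \<in> zvec k" and "lincomb bs a = lincomb bs b"
  then have "lincomb bs (\<lambda>j. a j - b j) = (\<lambda>i. 0)"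
    by (simp add: lincomb_diff)
  then have "\<forall>j<k. a j - b j = 0"
    using basis_indep unfolding zindep_def by blast
  show "a = b"
  proof
    fix j
    show "a j = b j"
      using \<open>\<forall>j<k. a j - b j = 0\<close> ab by (cases "j < k") (auto simp: zvec_def)
  qed
qed

definition coords :: "(nat \<Rightarrow> int) \<Rightarrow> nat \<Rightarrow> int" where
  "coords = inv_into (zvec k) (lincomb bs)"

lemma coords_in_zvec: "x \<in> T \<Longrightarrow> coords x \<in> zvec k"
  unfolding coords_def by (rule inv_into_into) (simp add: T_eq_lincomb_image)

lemma lincomb_coords: "x \<in> T \<Longrightarrow> lincomb bs (coords x) = x"
  unfolding coords_def by (rule f_inv_into_f[where f = "lincomb bs"]) (simp add: T_eq_lincomb_image)

lemma coords_lincomb: "c \<in> zvec k \<Longrightarrow> coords (lincomb bs c) = c"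
  unfolding coords_def using inj_on_lincomb by (rule inv_into_f_f)

lemma coords_add:
  assumes "x \<in> T" "y \<in> T"
  shows "coords (\<lambda>i. x i + y i) = (\<lambda>j. coords x j + coords y j)"
proof -
  have "lincomb bs (\<lambda>j. coords x j + coords y j) = (\<lambda>i. x i + y i)"
    using assms by (simp add: lincomb_add lincomb_coords)
  moreover have "(\<lambda>j. coords x j + coords y j) \<in> zvec k"
    using coords_in_zvec assms by (auto simp: zvec_def)
  ultimately show ?thesis
    using coords_lincomb by metis
qed

lemma coords_basis_vector: "j < k \<Longrightarrow> coords (bs ! j) = (\<lambda>i. if i = j then 1 else 0)"
  using coords_lincomb[of "\<lambda>i. if i = j then 1 else 0"] lincomb_unit_vector[of j bs]
  by (simp add: zvec_def)

text \<open>Writing \<open>M\<close> for the coordinate vectors of \<open>\<langle>S\<rangle>\<close>, we have \<open>\<int>\<^sup>k / M \<cong> (\<int>\<^sup>l/\<langle>S\<rangle>)\<^sub>t\<^sub>o\<^sub>r\<close>.\<close>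

definition lattice_coords :: "(nat \<Rightarrow> int) set" where
  "lattice_coords = {c \<in> zvec k. lincomb bs c \<in> L}"

lemma lattice_coords_subset_zvec: "lattice_coords \<subseteq> zvec k"
  unfolding lattice_coords_def by auto

lemma lattice_coords_zsubgroup: "zsubgroup lattice_coords"
  unfolding zsubgroup_def
proof (intro conjI ballI)
  show "(\<lambda>i. 0) \<in> lattice_coords"
    unfolding lattice_coords_def using zsubgroup_zero[OF L_zsubgroup] by (simp add: zvec_def)
next
  fix x y
  assume "x \<in> lattice_coords" "y \<in> lattice_coords"
  then show "(\<lambda>i. x i + y i) \<in> lattice_coords"
    unfolding lattice_coords_def using zsubgroup_add[OF L_zsubgroup, of "lincomb bs x" "lincomb bs y"]
    by (simp add: lincomb_add zvec_def)
next
  fix x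
  assume "x \<in> lattice_coords"
  moreover have "lincomb bs (\<lambda>j. - x j) = (\<lambda>i. - lincomb bs x i)"
    using lincomb_smult[of bs "-1" x] by simp
  ultimately show "(\<lambda>i. - x i) \<in> lattice_coords"
    unfolding lattice_coords_def using zsubgroup_uminus[OF L_zsubgroup, of "lincomb bs x"]
    by (simp add: zvec_def)
qed

lemma coords_in_lattice_coords_iff: "x \<in> T \<Longrightarrow> coords x \<in> lattice_coords \<longleftrightarrow> x \<in> L"
  unfolding lattice_coords_def using coords_in_zvec lincomb_coords by auto

lemma L_eq_lincomb_image: "L = lincomb bs ` lattice_coords"
proof
  show "L \<subseteq> lincomb bs ` lattice_coords"
  proof
    fix x
    assume "x \<in> L"
    with L_subset_T have "x \<in> T" "coords x \<in> lattice_coords"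
      using coords_in_lattice_coords_iff by auto
    then show "x \<in> lincomb bs ` lattice_coords"
      using lincomb_coords by (intro image_eqI[of x _ "coords x"]) auto
  qed
qed (auto simp: lattice_coords_def)

lemma torsion_exponent_exists: "\<exists>E :: nat. E > 0 \<and> (\<forall>x\<in>T. (\<lambda>i. int E * x i) \<in> L)"
proof -
  have "\<exists>n :: nat. n > 0 \<and> (\<lambda>i. int n * (bs ! j) i) \<in> L" if j: "j < k" for j
  proof -
    obtain a where "a > 0" "(\<lambda>i. a * (bs ! j) i) \<in> L"
      using basis_vector_in_T[OF j] unfolding torsion_def by auto
    then show ?thesis
      by (intro exI[of _ "nat a"]) simp
  qed
  then obtain f where f: "\<And>j. j < k \<Longrightarrow> f j > 0 \<and> (\<lambda>i. int (f j) * (bs ! j) i) \<in> L"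
    by metis
  define E where "E = (\<Prod>j<k. f j)"
  have E_basis: "(\<lambda>i. int E * (bs ! j) i) \<in> L" if j: "j < k" for j
  proof -
    have "E = (\<Prod>j'\<in>{..<k} - {j}. f j') * f j"
      unfolding E_def using j by (simp add: prod.remove mult.commute)
    then have "(\<lambda>i. int E * (bs ! j) i) = (\<lambda>i. int (\<Prod>j'\<in>{..<k} - {j}. f j') * (int (f j) * (bs ! j) i))"
      by (simp add: mult.assoc)
    also have "\<dots> \<in> L"
      using zsubgroup_smult[OF L_zsubgroup conjunct2[OF f[OF j]]] .
    finally show ?thesis .
  qed
  have "(\<lambda>i. int E * x i) \<in> L" if x: "x \<in> T" for x
  proof -
    have "(\<lambda>i. int E * x i) = (\<lambda>i. int E * lincomb bs (coords x) i)"
      using lincomb_coords[OF x] by simp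
    also have "\<dots> = (\<lambda>i. \<Sum>j<k. coords x j * (int E * (bs ! j) i))"
      unfolding lincomb_def by (simp add: sum_distrib_left algebra_simps)
    also have "\<dots> \<in> L"
      using E_basis by (intro zsubgroup_lincomb[OF L_zsubgroup]) auto
    finally show ?thesis .
  qed
  moreover have "E > 0"
    unfolding E_def using f by (simp add: prod_pos)
  ultimately show ?thesis
    by blast
qed

lemma max_div_pos: "max_div l A S > 0"
  and max_div_smult_in_L: "x \<in> T \<Longrightarrow> (\<lambda>i. int (max_div l A S) * x i) \<in> L"
  using LeastI_ex[OF torsion_exponent_exists] unfolding max_div_def by auto

end

locale torsion_basis_modulus = torsion_basis +
  fixes q :: int
  assumes q_pos: "q > 0" and max_div_dvd: "int (max_div l A S) dvd q"
begin

lemma q_smult_in_L: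
  assumes "x \<in> T"
  shows "(\<lambda>i. q * x i) \<in> L"
proof -
  obtain r where "q = int (max_div l A S) * r"
    using max_div_dvd ..
  moreover have "(\<lambda>i. r * (int (max_div l A S) * x i)) \<in> L"
    using zsubgroup_smult[OF L_zsubgroup max_div_smult_in_L[OF assms]] .
  ultimately show ?thesis
    by (simp add: mult.assoc mult.left_commute)
qed

lemma vec_mod_lincomb_eq_iff:
  assumes "a \<in> lattice_coords" "b \<in> lattice_coords"
  shows "vec_mod q (lincomb bs a) = vec_mod q (lincomb bs b) \<longleftrightarrow> vec_mod q a = vec_mod q b"
proof
  assume "vec_mod q a = vec_mod q b"
  then have "\<forall>j. q dvd (a j - b j)"
    by (simp add: vec_mod_eq_iff)
  then have "q dvd lincomb bs (\<lambda>j. a j - b j) i" for i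
    unfolding lincomb_def by (intro dvd_sum) simp
  then show "vec_mod q (lincomb bs a) = vec_mod q (lincomb bs b)"
    by (simp add: vec_mod_eq_iff lincomb_diff)
next
  assume "vec_mod q (lincomb bs a) = vec_mod q (lincomb bs b)"
  then have dvd: "\<forall>i. q dvd (lincomb bs a i - lincomb bs b i)"
    by (simp add: vec_mod_eq_iff)
  define w where "w = (\<lambda>i. (lincomb bs a i - lincomb bs b i) div q)"
  have qw: "(\<lambda>i. q * w i) = lincomb bs (\<lambda>j. a j - b j)"
    unfolding w_def lincomb_diff using dvd by (simp add: fun_eq_iff)
  have ab_M: "(\<lambda>j. a j - b j) \<in> lattice_coords"
    using zsubgroup_diff[OF lattice_coords_zsubgroup assms] .
  have "lincomb bs a \<in> zvec l" "lincomb bs b \<in> zvec l"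
    using lincomb_in_T torsion_subset_zvec by blast+
  then have "w \<in> zvec l"
    unfolding w_def zvec_def by auto
  moreover have "(\<lambda>i. q * w i) \<in> T"
    unfolding qw using lincomb_in_T .
  ultimately have w_T: "w \<in> T"
    using torsion_saturated q_pos by blast
  have "lincomb bs (\<lambda>j. q * coords w j) = lincomb bs (\<lambda>j. a j - b j)"
    using lincomb_coords[OF w_T] qw by (simp add: lincomb_smult)
  moreover have "(\<lambda>j. q * coords w j) \<in> zvec k"
    using coords_in_zvec[OF w_T] by (simp add: zvec_def)
  ultimately have "(\<lambda>j. q * coords w j) = (\<lambda>j. a j - b j)"
    using inj_on_lincomb ab_M lattice_coords_subset_zvec by (auto dest: inj_onD)
  then have "\<forall>j. q dvd (a j - b j)"
    by (metis dvd_triv_left)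
  then show "vec_mod q a = vec_mod q b"
    by (simp add: vec_mod_eq_iff)
qed

lemma card_vec_mod_lattice_eq: "card (vec_mod q ` L) = card (vec_mod q ` lattice_coords)"
proof -
  have "vec_mod q ` L = (\<lambda>c. vec_mod q (lincomb bs c)) ` lattice_coords"
    using L_eq_lincomb_image by (simp add: image_image)
  also have "card \<dots> = card (vec_mod q ` lattice_coords)"
    by (rule card_image_eq_if_same_fibres) (rule vec_mod_lincomb_eq_iff)
  finally show ?thesis .
qed

lemma card_vec_mod_lattice_coords_pos: "card (vec_mod q ` lattice_coords) > 0"
proof -
  have "vec_mod q ` lattice_coords \<subseteq> residue_box k q"
    using lattice_coords_subset_zvec vec_mod_in_residue_box q_pos by blast
  then have "finite (vec_mod q ` lattice_coords)"
    using finite_residue_box[OF q_pos] finite_subset by blast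
  moreover have "vec_mod q ` lattice_coords \<noteq> {}"
    using zsubgroup_zero[OF lattice_coords_zsubgroup] by blast
  ultimately show ?thesis
    by (simp add: card_gt_0_iff)
qed

text \<open>Membership in \<open>M\<close> only depends on the residue modulo \<open>q\<close>, as \<open>q\<int>\<^sup>k \<subseteq> M\<close>.\<close>

lemma in_lattice_coords_iff_vec_mod:
  assumes c: "c \<in> zvec k"
  shows "c \<in> lattice_coords \<longleftrightarrow> vec_mod q c \<in> vec_mod q ` lattice_coords"
proof
  assume "vec_mod q c \<in> vec_mod q ` lattice_coords"
  then obtain m where m: "m \<in> lattice_coords" "vec_mod q c = vec_mod q m"
    by blast
  define w where "w = (\<lambda>i. (c i - m i) div q)"
  have "\<forall>i. q dvd (c i - m i)"
    using m(2) by (simp add: vec_mod_eq_iff)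
  then have cm: "c = (\<lambda>i. m i + q * w i)"
    unfolding w_def by (simp add: fun_eq_iff dvd_mult_div_cancel)
  have "w \<in> zvec k"
    using c m lattice_coords_subset_zvec unfolding w_def by (auto simp: zvec_def)
  moreover have "lincomb bs (\<lambda>i. q * w i) \<in> L"
    unfolding lincomb_smult using q_smult_in_L lincomb_in_T by blast
  ultimately have "(\<lambda>i. q * w i) \<in> lattice_coords"
    unfolding lattice_coords_def by (simp add: zvec_def)
  with m(1) show "c \<in> lattice_coords"
    unfolding cm by (rule zsubgroup_add[OF lattice_coords_zsubgroup])
qed blast

definition residue_congruence :: "((nat \<Rightarrow> int) \<times> (nat \<Rightarrow> int)) set" where
  "residue_congruence = {(a, b). a \<in> residue_box k q \<and> b \<in> residue_box k q \<and> (\<lambda>i. a i - b i) \<in> lattice_coords}"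

lemma equiv_residue_congruence: "equiv (residue_box k q) residue_congruence"
  unfolding residue_congruence_def using lattice_coords_zsubgroup by (rule equiv_zsubgroup_congruence)

lemma card_residue_congruence_class:
  assumes a: "a \<in> residue_box k q"
  shows "card (residue_congruence``{a}) = card (vec_mod q ` lattice_coords)"
proof -
  let ?f = "\<lambda>b. vec_mod q (\<lambda>i. a i - b i)"
  have cls: "residue_congruence``{a} = {b \<in> residue_box k q. (\<lambda>i. a i - b i) \<in> lattice_coords}"
    using a unfolding residue_congruence_def by auto
  have "inj_on ?f (residue_congruence``{a})"
  proof (rule inj_onI)
    fix b b'
    assume "b \<in> residue_congruence``{a}" "b' \<in> residue_congruence``{a}" "?f b = ?f b'"
    then have "b \<in> residue_box k q" "b' \<in> residue_box k q" "vec_mod q b' = vec_mod q b"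
      unfolding cls by (auto simp: vec_mod_eq_iff)
    then show "b = b'"
      by (metis vec_mod_residue_box)
  qed
  moreover have "?f ` (residue_congruence``{a}) = vec_mod q ` lattice_coords"
  proof
    show "?f ` (residue_congruence``{a}) \<subseteq> vec_mod q ` lattice_coords"
      unfolding cls by auto
    show "vec_mod q ` lattice_coords \<subseteq> ?f ` (residue_congruence``{a})"
    proof
      fix h
      assume "h \<in> vec_mod q ` lattice_coords"
      then obtain m where m: "m \<in> lattice_coords" "h = vec_mod q m"
        by blast
      define b where "b = vec_mod q (\<lambda>i. a i - m i)"
      have b_box: "b \<in> residue_box k q"
        unfolding b_def using a m(1) lattice_coords_subset_zvec residue_box_subset_zvec zvec_diff q_pos
        by (blast intro: vec_mod_in_residue_box)
      have h_eq: "?f b = h"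
        unfolding b_def m(2) vec_mod_def by (simp add: mod_diff_right_eq)
      have "(\<lambda>i. a i - b i) \<in> zvec k"
        using a b_box residue_box_subset_zvec zvec_diff by blast
      then have "(\<lambda>i. a i - b i) \<in> lattice_coords"
        using in_lattice_coords_iff_vec_mod h_eq m by auto
      with b_box h_eq show "h \<in> ?f ` (residue_congruence``{a})"
        unfolding cls by blast
    qed
  qed
  ultimately show ?thesis
    by (metis card_image)
qed

lemma vec_mod_coords_image: "(\<lambda>x. vec_mod q (coords x)) ` T = residue_box k q"
proof
  show "(\<lambda>x. vec_mod q (coords x)) ` T \<subseteq> residue_box k q"
    using coords_in_zvec vec_mod_in_residue_box q_pos by blast
  show "residue_box k q \<subseteq> (\<lambda>x. vec_mod q (coords x)) ` T"
  proof
    fix b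
    assume b: "b \<in> residue_box k q"
    moreover have "b \<in> zvec k"
      using b residue_box_subset_zvec by blast
    ultimately have "vec_mod q (coords (lincomb bs b)) = b"
      by (simp add: coords_lincomb vec_mod_residue_box)
    with lincomb_in_T show "b \<in> (\<lambda>x. vec_mod q (coords x)) ` T"
      by (metis image_eqI)
  qed
qed

text \<open>Reduction of coordinates modulo \<open>q\<close> identifies \<open>(\<int>\<^sup>l/\<langle>S\<rangle>)\<^sub>t\<^sub>o\<^sub>r\<close> with \<open>(\<int>/q\<int>)\<^sup>k / (M mod q)\<close>.\<close>

lemma card_torsion_quotient:
  "card (T // tor_rel l A S) = card (residue_box k q // residue_congruence)"
proof (rule card_quotient_eq_if_reflects)
  show "equiv T (tor_rel l A S)"
    unfolding tor_rel_def using L_zsubgroup by (rule equiv_zsubgroup_congruence)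
  show "equiv (residue_box k q) residue_congruence"
    by (rule equiv_residue_congruence)
  show "(\<lambda>x. vec_mod q (coords x)) ` T = residue_box k q"
    by (rule vec_mod_coords_image)
next
  fix x y
  assume x: "x \<in> T" and y: "y \<in> T"
  let ?d = "\<lambda>j. coords x j - coords y j"
  let ?d' = "\<lambda>j. vec_mod q (coords x) j - vec_mod q (coords y) j"
  have d_zvec: "?d \<in> zvec k" and d'_zvec: "?d' \<in> zvec k"
    using x y coords_in_zvec vec_mod_in_residue_box[OF _ q_pos] residue_box_subset_zvec
    by (blast intro: zvec_diff)+
  have "(x, y) \<in> tor_rel l A S \<longleftrightarrow> (\<lambda>i. x i - y i) \<in> L"
    using x y unfolding tor_rel_def by simp
  also have "\<dots> \<longleftrightarrow> ?d \<in> lattice_coords"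
    using x y d_zvec by (simp add: lattice_coords_def lincomb_diff lincomb_coords)
  also have "\<dots> \<longleftrightarrow> vec_mod q ?d' \<in> vec_mod q ` lattice_coords"
    using in_lattice_coords_iff_vec_mod[OF d_zvec] by (simp add: vec_mod_def mod_diff_eq)
  also have "\<dots> \<longleftrightarrow> ?d' \<in> lattice_coords"
    using in_lattice_coords_iff_vec_mod[OF d'_zvec] by simp
  also have "\<dots> \<longleftrightarrow> (vec_mod q (coords x), vec_mod q (coords y)) \<in> residue_congruence"
    using x y coords_in_zvec vec_mod_in_residue_box q_pos
    unfolding residue_congruence_def by auto
  finally show "(x, y) \<in> tor_rel l A S \<longleftrightarrow>
      (vec_mod q (coords x), vec_mod q (coords y)) \<in> residue_congruence" .
qed

lemma m_arith_mult_card_vec_mod_lattice_coords: "m_arith l A S * card (vec_mod q ` lattice_coords) = nat q ^ k"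
  unfolding m_arith_def card_torsion_quotient
  using card_quotient_mult_class_size[OF equiv_residue_congruence finite_residue_box[OF q_pos]]
    card_residue_congruence_class card_residue_box[OF q_pos]
  by simp

section \<open>Characters of the torsion group\<close>

definition characters :: "((nat \<Rightarrow> int) \<Rightarrow> complex) set" where
  "characters = {\<phi>. (\<forall>x\<in>T. \<phi> x \<noteq> 0) \<and> (\<forall>x\<in>T. \<forall>y\<in>T. \<phi> (\<lambda>i. x i + y i) = \<phi> x * \<phi> y) \<and>
     (\<forall>x\<in>L. \<phi> x = 1) \<and> (\<forall>x. x \<notin> T \<longrightarrow> \<phi> x = 1)}"

lemma m_Cstar_eq_card_characters: "m_Cstar l A S = card characters"
  unfolding m_Cstar_def characters_def ..

definition character_of :: "(nat \<Rightarrow> int) \<Rightarrow> (nat \<Rightarrow> int) \<Rightarrow> complex" where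
  "character_of y = (\<lambda>x. if x \<in> T then unit_root q (dot k (coords x) y) else 1)"

lemma character_of_in_characters:
  assumes y: "y \<in> annihilator k q lattice_coords"
  shows "character_of y \<in> characters"
  unfolding characters_def mem_Collect_eq
proof (intro conjI ballI allI impI)
  fix x x'
  assume "x \<in> T" "x' \<in> T"
  moreover from this have "(\<lambda>i. x i + x' i) \<in> T"
    by (rule zsubgroup_add[OF T_zsubgroup])
  ultimately show "character_of y (\<lambda>i. x i + x' i) = character_of y x * character_of y x'"
    unfolding character_of_def by (simp add: coords_add dot_add_left unit_root_add)
next
  fix x
  assume "x \<in> L"
  with L_subset_T have "x \<in> T" "coords x \<in> lattice_coords"
    using coords_in_lattice_coords_iff by auto
  with y show "character_of y x = 1"
    unfolding character_of_def annihilator_def using unit_root_eq_1_iff[OF q_pos] by simp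
qed (simp_all add: character_of_def)

lemma unit_root_coordinate_of_character_of:
  "j < k \<Longrightarrow> character_of y (bs ! j) = unit_root q (y j)"
  unfolding character_of_def dot_def
  using basis_vector_in_T coords_basis_vector
  by (simp add: if_distrib[of "\<lambda>t. t * _"] sum.delta cong: if_cong)

lemma inj_on_character_of: "inj_on character_of (annihilator k q lattice_coords)"
proof (rule inj_onI)
  fix y y'
  assume y: "y \<in> annihilator k q lattice_coords" and y': "y' \<in> annihilator k q lattice_coords"
    and eq: "character_of y = character_of y'"
  have "q dvd (y j - y' j)" for j
  proof (cases "j < k")
    case True
    then show ?thesis
      using fun_cong[OF eq, of "bs ! j"] unit_root_coordinate_of_character_of
      by (simp add: unit_root_eq_iff[OF q_pos])
  next
    case False
    with y y' show ?thesis
      unfolding annihilator_def residue_box_def by auto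
  qed
  then have "vec_mod q y = vec_mod q y'"
    by (simp add: vec_mod_eq_iff)
  with y y' show "y = y'"
    unfolding annihilator_def by (metis (no_types, lifting) mem_Collect_eq vec_mod_residue_box)
qed

context
  fixes \<phi>
  assumes \<phi>: "\<phi> \<in> characters"
begin

lemma character_add: "x \<in> T \<Longrightarrow> y \<in> T \<Longrightarrow> \<phi> (\<lambda>i. x i + y i) = \<phi> x * \<phi> y"
  and character_nonzero: "x \<in> T \<Longrightarrow> \<phi> x \<noteq> 0"
  and character_L: "x \<in> L \<Longrightarrow> \<phi> x = 1"
  and character_outside: "x \<notin> T \<Longrightarrow> \<phi> x = 1"
  using \<phi> unfolding characters_def by blast+

lemma character_zero: "\<phi> (\<lambda>i. 0) = 1"
proof -
  have z: "(\<lambda>i. 0) \<in> T"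
    by (rule zsubgroup_zero[OF T_zsubgroup])
  then have "\<phi> (\<lambda>i. 0) = \<phi> (\<lambda>i. 0) * \<phi> (\<lambda>i. 0)"
    using character_add[OF z z] by simp
  with character_nonzero[OF z] show ?thesis
    by simp
qed

lemma character_smult_nat:
  assumes t: "t \<in> T"
  shows "\<phi> (\<lambda>i. int n * t i) = \<phi> t ^ n"
proof (induction n)
  case 0
  then show ?case by (simp add: character_zero)
next
  case (Suc n)
  have "(\<lambda>i. int n * t i) \<in> T"
    using zsubgroup_smult[OF T_zsubgroup t] .
  from character_add[OF this t] Suc show ?case
    by (simp add: distrib_right add.commute)
qed

lemma character_smult:
  assumes t: "t \<in> T" "\<phi> t = unit_root q a"
  shows "\<phi> (\<lambda>i. c * t i) = unit_root q (c * a)"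
proof (cases "c \<ge> 0")
  case True
  then show ?thesis
    using character_smult_nat[OF t(1), of "nat c"] t(2) by (simp add: unit_root_power)
next
  case False
  define n where "n = nat (- c)"
  have nt: "(\<lambda>i. int n * t i) \<in> T"
    using zsubgroup_smult[OF T_zsubgroup t(1)] .
  then have neg_nt: "(\<lambda>i. - (int n * t i)) \<in> T"
    by (rule zsubgroup_uminus[OF T_zsubgroup])
  have "\<phi> (\<lambda>i. - (int n * t i)) * unit_root q (int n * a) = 1"
    using character_add[OF neg_nt nt] character_zero character_smult_nat[OF t(1), of n] t(2)
    by (simp add: unit_root_power)
  moreover have "unit_root q (- (int n * a)) * unit_root q (int n * a) = 1"
    by (simp flip: unit_root_add)
  ultimately have "\<phi> (\<lambda>i. - (int n * t i)) = unit_root q (- (int n * a))"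
    by (metis mult_cancel_right unit_root_nonzero)
  with False show ?thesis
    unfolding n_def by simp
qed

lemma character_lincomb:
  assumes "finite J" "\<And>j. j \<in> J \<Longrightarrow> t j \<in> T \<and> \<phi> (t j) = unit_root q (a j)"
  shows "\<phi> (\<lambda>i. \<Sum>j\<in>J. c j * t j i) = unit_root q (\<Sum>j\<in>J. c j * a j)"
  using assms
proof (induction J rule: finite_induct)
  case empty
  then show ?case by (simp add: character_zero)
next
  case (insert j J)
  have "(\<lambda>i. c j * t j i) \<in> T"
    using insert.prems zsubgroup_smult[OF T_zsubgroup] by blast
  moreover have "(\<lambda>i. \<Sum>j\<in>J. c j * t j i) \<in> T"
    using insert.prems by (intro zsubgroup_lincomb[OF T_zsubgroup insert.hyps(1)]) auto
  ultimately have "\<phi> (\<lambda>i. \<Sum>j\<in>insert j J. c j * t j i)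
      = \<phi> (\<lambda>i. c j * t j i) * \<phi> (\<lambda>i. \<Sum>j\<in>J. c j * t j i)"
    using character_add insert.hyps by simp
  also have "\<dots> = unit_root q (c j * a j) * unit_root q (\<Sum>j\<in>J. c j * a j)"
    using character_smult insert.IH insert.prems by simp
  finally show ?case
    using insert.hyps by (simp add: unit_root_add)
qed

lemma character_value_unit_root:
  assumes t: "t \<in> T"
  obtains a where "0 \<le> a" "a < q" "\<phi> t = unit_root q a"
proof (rule root_of_unity_is_unit_root[OF q_pos])
  have "(\<lambda>i. int (nat q) * t i) \<in> L"
    using q_smult_in_L[OF t] q_pos by simp
  then show "\<phi> t ^ nat q = 1"
    using character_smult_nat[OF t, of "nat q"] character_L by simp
qed

definition character_exponents :: "nat \<Rightarrow> int" where
  "character_exponents =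
     (\<lambda>j. if j < k then (SOME a. 0 \<le> a \<and> a < q \<and> \<phi> (bs ! j) = unit_root q a) else 0)"

lemma character_exponents:
  assumes "j < k"
  shows "0 \<le> character_exponents j" "character_exponents j < q"
    and "\<phi> (bs ! j) = unit_root q (character_exponents j)"
proof -
  obtain a where "0 \<le> a \<and> a < q \<and> \<phi> (bs ! j) = unit_root q a"
    using character_value_unit_root[OF basis_vector_in_T[OF assms]] by blast
  then have "0 \<le> character_exponents j \<and> character_exponents j < q \<and>
      \<phi> (bs ! j) = unit_root q (character_exponents j)"
    unfolding character_exponents_def using assms someI[of "\<lambda>a. 0 \<le> a \<and> a < q \<and> \<phi> (bs ! j) = unit_root q a"]
    by simp
  then show "0 \<le> character_exponents j" "character_exponents j < q"
    "\<phi> (bs ! j) = unit_root q (character_exponents j)"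
    by blast+
qed

lemma character_eq_character_of: "\<phi> = character_of character_exponents"
proof
  fix x
  show "\<phi> x = character_of character_exponents x"
  proof (cases "x \<in> T")
    case True
    then have "\<phi> x = \<phi> (\<lambda>i. \<Sum>j<k. coords x j * (bs ! j) i)"
      using lincomb_coords[OF True] unfolding lincomb_def by simp
    also have "\<dots> = unit_root q (\<Sum>j<k. coords x j * character_exponents j)"
      using basis_vector_in_T character_exponents(3) by (intro character_lincomb) auto
    finally show ?thesis
      unfolding character_of_def dot_def using True by simp
  qed (simp add: character_outside character_of_def)
qed

lemma character_exponents_in_annihilator: "character_exponents \<in> annihilator k q lattice_coords"
  unfolding annihilator_def mem_Collect_eq
proof
  show "character_exponents \<in> residue_box k q"
    unfolding residue_box_def
  proof (intro CollectI conjI allI impI)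
    fix i
    assume "i < k"
    then show "0 \<le> character_exponents i" "character_exponents i < q"
      by (rule character_exponents)+
  next
    fix i
    assume "k \<le> i"
    then show "character_exponents i = 0"
      by (simp add: character_exponents_def)
  qed
  show "\<forall>c\<in>lattice_coords. q dvd dot k c character_exponents"
  proof
    fix c
    assume "c \<in> lattice_coords"
    then have c: "lincomb bs c \<in> L" "c \<in> zvec k"
      unfolding lattice_coords_def by auto
    then have "character_of character_exponents (lincomb bs c) = unit_root q (dot k c character_exponents)"
      unfolding character_of_def using coords_lincomb lincomb_in_T by simp
    moreover have "character_of character_exponents (lincomb bs c) = 1"
      using character_L[OF c(1)] character_eq_character_of by simp
    ultimately show "q dvd dot k c character_exponents"
      using unit_root_eq_1_iff[OF q_pos] by simp
  qed
qed

end

lemma bij_betw_character_of: "bij_betw character_of (annihilator k q lattice_coords) characters"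
  unfolding bij_betw_def
proof
  show "character_of ` annihilator k q lattice_coords = characters"
    using character_of_in_characters character_eq_character_of character_exponents_in_annihilator
    by (auto intro: image_eqI)
qed (rule inj_on_character_of)

theorem m_Cstar_eq_m_arith: "m_Cstar l A S = m_arith l A S"
proof -
  have "m_Cstar l A S * card (vec_mod q ` lattice_coords) = nat q ^ k"
    using m_Cstar_eq_card_characters bij_betw_same_card[OF bij_betw_character_of]
      card_annihilator_mult_card_vec_mod_image[OF q_pos lattice_coords_zsubgroup lattice_coords_subset_zvec] by simp
  with m_arith_mult_card_vec_mod_lattice_coords card_vec_mod_lattice_coords_pos show ?thesis
    by (metis mult_right_cancel neq0_conv)
qed

end

section \<open>The rank of \<open>\<langle>S\<rangle>\<close>\<close>

context torsion_basis
begin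

lemma lincomb_sum_coords:
  assumes "finite V" "V \<subseteq> T"
  shows "lincomb bs (\<lambda>j. \<Sum>v\<in>V. d v * coords v j) = (\<lambda>i. \<Sum>v\<in>V. d v * v i)"
proof
  fix i
  have "lincomb bs (\<lambda>j. \<Sum>v\<in>V. d v * coords v j) i = (\<Sum>j<k. \<Sum>v\<in>V. d v * (coords v j * (bs ! j) i))"
    unfolding lincomb_def by (simp add: sum_distrib_right mult.assoc)
  also have "\<dots> = (\<Sum>v\<in>V. d v * lincomb bs (coords v) i)"
    unfolding lincomb_def by (subst sum.swap) (simp add: sum_distrib_left)
  also have "\<dots> = (\<Sum>v\<in>V. d v * v i)"
    using assms lincomb_coords by (intro sum.cong) auto
  finally show "lincomb bs (\<lambda>j. \<Sum>v\<in>V. d v * coords v j) i = (\<Sum>v\<in>V. d v * v i)" .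
qed

lemma card_le_if_zlin_indep:
  assumes V: "finite V" "V \<subseteq> L" "zlin_indep V"
  shows "card V \<le> k"
proof (rule ccontr)
  assume "\<not> card V \<le> k"
  moreover have V_T: "V \<subseteq> T"
    using V(2) L_subset_T by blast
  moreover from this have "coords ` V \<subseteq> zvec k"
    using coords_in_zvec by blast
  ultimately obtain d where d: "\<exists>v\<in>V. d v \<noteq> 0" "(\<lambda>j. \<Sum>v\<in>V. d v * coords v j) = (\<lambda>j. 0)"
    using zvec_linear_dependence[OF V(1), of coords k] by auto
  have "(\<lambda>i. \<Sum>v\<in>V. d v * v i) = (\<lambda>i. 0)"
    using lincomb_sum_coords[OF V(1) V_T, of d] d(2) by simp
  with V(3) d(1) show False
    unfolding zlin_indep_def by blast
qed

text \<open>Scaling the basis of the torsion preimage by the exponent gives \<open>k\<close> independent vectors of \<open>\<langle>S\<rangle>\<close>.\<close>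

lemma zlin_indep_scaled_basis:
  obtains V where "finite V" "V \<subseteq> L" "zlin_indep V" "card V = k"
proof -
  define e where "e = int (max_div l A S)"
  define g where "g = (\<lambda>j i. e * (bs ! j) i)"
  have e_pos: "e > 0"
    unfolding e_def using max_div_pos by simp
  have lincomb_g: "(\<lambda>i. \<Sum>j<k. c j * g j i) = lincomb bs (\<lambda>j. c j * e)" for c
    unfolding lincomb_def g_def by (simp add: mult.assoc mult.left_commute)
  have g_indep: "\<forall>j<k. c j = 0" if "(\<lambda>i. \<Sum>j<k. c j * g j i) = (\<lambda>i. 0)" for c
  proof -
    from that have "\<forall>j<k. c j * e = 0"
      using basis_indep unfolding lincomb_g zindep_def by blast
    with e_pos show ?thesis
      by simp
  qed
  have inj_g: "inj_on g {..<k}"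
  proof (rule inj_onI)
    fix a b
    let ?u = "\<lambda>a i. if i = a then 1 else (0 :: int)"
    assume ab: "a \<in> {..<k}" "b \<in> {..<k}" "g a = g b"
    then have "lincomb bs (?u a) = lincomb bs (?u b)"
      using e_pos lincomb_unit_vector unfolding g_def by (auto simp: fun_eq_iff)
    moreover have "?u a \<in> zvec k" "?u b \<in> zvec k"
      using ab by (auto simp: zvec_def)
    ultimately have "?u a = ?u b"
      using inj_on_lincomb by (blast dest: inj_onD)
    then show "a = b"
      by (metis (full_types) zero_neq_one)
  qed
  show thesis
  proof (rule that[of "g ` {..<k}"])
    show "g ` {..<k} \<subseteq> L"
      unfolding g_def e_def using max_div_smult_in_L basis_vector_in_T by auto
    show "card (g ` {..<k}) = k"
      using card_image[OF inj_g] by simp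
    show "zlin_indep (g ` {..<k})"
      unfolding zlin_indep_def
    proof (intro allI impI ballI)
      fix c v
      assume sum_0: "(\<lambda>i. \<Sum>v\<in>g ` {..<k}. c v * v i) = (\<lambda>i. 0)" and v: "v \<in> g ` {..<k}"
      have "(\<Sum>v\<in>g ` {..<k}. c v * v i) = (\<Sum>j<k. c (g j) * g j i)" for i
        using sum.reindex[OF inj_g, of "\<lambda>v. c v * v i"] by simp
      with sum_0 have "(\<lambda>i. \<Sum>j<k. c (g j) * g j i) = (\<lambda>i. 0)"
        by (simp add: fun_eq_iff)
      with v show "c v = 0"
        using g_indep[of "\<lambda>j. c (g j)"] by auto
    qed
  qed simp
qed

theorem rankS_eq_length: "rankS A S = k"
proof -
  define C where "C = {card V | V. finite V \<and> V \<subseteq> L \<and> zlin_indep V}"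
  have le: "\<forall>n\<in>C. n \<le> k"
    unfolding C_def using card_le_if_zlin_indep by auto
  moreover have "k \<in> C"
  proof -
    obtain V where "finite V" "V \<subseteq> L" "zlin_indep V" "card V = k"
      by (rule zlin_indep_scaled_basis)
    then show ?thesis
      unfolding C_def by (intro CollectI exI[of _ V]) simp
  qed
  moreover have "finite C"
    using le finite_subset[of C "{..k}"] by auto
  ultimately have "Max C = k"
    by (intro Max_eqI) auto
  then show ?thesis
    unfolding rankS_def C_def .
qed

end

context torsion_basis_modulus
begin

lemma card_annihilator_L:
  assumes "k \<le> l"
  shows "card (annihilator l q L) = nat q ^ (l - k) * m_arith l A S"
proof -
  have "card (annihilator l q L) * card (vec_mod q ` lattice_coords) = nat q ^ l"
    using card_annihilator_mult_card_vec_mod_image[OF q_pos L_zsubgroup lattice_subset_zvec[OF vectors sublist]]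
    by (simp add: card_vec_mod_lattice_eq)
  also have "\<dots> = nat q ^ (l - k) * m_arith l A S * card (vec_mod q ` lattice_coords)"
    using assms m_arith_mult_card_vec_mod_lattice_coords by (simp add: mult.assoc flip: power_add)
  finally show ?thesis
    using card_vec_mod_lattice_coords_pos by simp
qed

end

lemma torsion_basis_exists:
  assumes "\<forall>\<alpha>\<in>set A. \<alpha> \<in> zvec l" "S \<subseteq> {..<length A}"
  obtains bs where "length bs \<le> l" "torsion_basis l A S bs"
  using zsubgroup_has_basis[OF torsion_zsubgroup[OF assms] torsion_subset_zvec] assms
  by (metis torsion_basis.intro)

lemma m_Cstar_eq_m_arith:
  assumes "\<forall>\<alpha>\<in>set A. \<alpha> \<in> zvec l" "S \<subseteq> {..<length A}"
  shows "m_Cstar l A S = m_arith l A S"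
proof -
  obtain bs where "torsion_basis l A S bs"
    using torsion_basis_exists[OF assms] .
  then interpret torsion_basis l A S bs .
  interpret torsion_basis_modulus l A S bs "int (max_div l A S)"
    by unfold_locales (simp_all add: max_div_pos)
  show ?thesis
    by (rule m_Cstar_eq_m_arith)
qed

lemma card_annihilator_lattice:
  assumes "\<forall>\<alpha>\<in>set A. \<alpha> \<in> zvec l" "S \<subseteq> {..<length A}"
    and "q > 0" "max_div l A S dvd q"
  shows "card (annihilator l (int q) (lattice A S)) = q ^ (l - rankS A S) * m_arith l A S"
proof -
  obtain bs where "length bs \<le> l" "torsion_basis l A S bs"
    using torsion_basis_exists[OF assms(1,2)] .
  then interpret torsion_basis l A S bs by simp
  interpret torsion_basis_modulus l A S bs "int q"
    by unfold_locales (use assms(3,4) in auto)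
  show ?thesis
    using card_annihilator_L[OF \<open>length bs \<le> l\<close>] rankS_eq_length by simp
qed

lemma card_sublist_solutions:
  assumes "\<forall>\<alpha>\<in>set A. \<alpha> \<in> zvec l" "S \<subseteq> {..<length A}"
    and "q > 0" "max_div l A S dvd q"
  shows "card {x \<in> {..<l} \<rightarrow>\<^sub>E {..<q}. \<forall>j\<in>S. (\<Sum>i<l. (A ! j) i * int (x i)) mod int q = 0}
           = q ^ (l - rankS A S) * m_arith l A S"
proof -
  let ?g = "\<lambda>x i. if i < l then int (x i) else 0"
  have "finite S"
    using assms(2) finite_subset by blast
  have "(\<forall>j\<in>S. (\<Sum>i<l. (A ! j) i * int (x i)) mod int q = 0)
          \<longleftrightarrow> ?g x \<in> annihilator l (int q) (lattice A S)"
    if x: "x \<in> {..<l} \<rightarrow>\<^sub>E {..<q}" for x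
  proof -
    have "(\<forall>j\<in>S. (\<Sum>i<l. (A ! j) i * int (x i)) mod int q = 0)
            \<longleftrightarrow> (\<forall>j\<in>S. int q dvd dot l (A ! j) (?g x))"
      by (simp add: dot_def dvd_eq_mod_eq_0)
    also have "\<dots> \<longleftrightarrow> (\<forall>v\<in>lattice A S. int q dvd dot l v (?g x))"
      using generator_in_lattice[OF \<open>finite S\<close>] dot_lattice_dvd by blast
    also have "\<dots> \<longleftrightarrow> ?g x \<in> annihilator l (int q) (lattice A S)"
      using bij_betw_apply[OF bij_betw_PiE_residue_box x] by (simp add: annihilator_def)
    finally show ?thesis .
  qed
  then have "{x \<in> {..<l} \<rightarrow>\<^sub>E {..<q}. \<forall>j\<in>S. (\<Sum>i<l. (A ! j) i * int (x i)) mod int q = 0}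
      = {x \<in> {..<l} \<rightarrow>\<^sub>E {..<q}. ?g x \<in> annihilator l (int q) (lattice A S)}"
    by blast
  also have "card \<dots> = card (annihilator l (int q) (lattice A S))"
    using bij_betw_PiE_residue_box by (rule card_preimage_bij_betw) (auto simp: annihilator_def)
  finally show ?thesis
    using card_annihilator_lattice[OF assms] by simp
qed

section \<open>Inclusion-exclusion\<close>

lemma sum_Pow_minus_one_power:
  assumes "finite J"
  shows "(\<Sum>S\<in>Pow J. (-1 :: int) ^ card S) = (if J = {} then 1 else 0)"
proof (cases "J = {}")
  case False
  then have "card {S \<in> Pow J. even (card S)} = card {S \<in> Pow J. odd (card S)}"
    using card_subsupersets_even_odd[OF assms, of "{}"] by (simp add: Pow_def conj_commute psubset_eq)
  with assms False show ?thesis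
    by (simp add: sum_alternating_cancels)
qed simp

lemma card_avoiding_inclusion_exclusion:
  assumes "finite X" "finite I"
  shows "int (card {x \<in> X. \<forall>j\<in>I. \<not> P j x})
           = (\<Sum>S\<in>Pow I. (-1) ^ card S * int (card {x \<in> X. \<forall>j\<in>S. P j x}))"
proof -
  have "(\<Sum>S\<in>Pow I. (-1) ^ card S * int (card {x \<in> X. \<forall>j\<in>S. P j x}))
      = (\<Sum>S\<in>Pow I. \<Sum>x\<in>X. if \<forall>j\<in>S. P j x then (-1) ^ card S else 0)"
    by (simp add: sum.If_cases[OF assms(1)] Int_def conj_commute mult.commute)
  also have "\<dots> = (\<Sum>x\<in>X. \<Sum>S\<in>{S \<in> Pow I. \<forall>j\<in>S. P j x}. (-1) ^ card S)"
    by (subst sum.swap) (simp only: sum.inter_filter finite_Pow_iff assms(2))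
  also have "\<dots> = (\<Sum>x\<in>X. \<Sum>S\<in>Pow {j \<in> I. P j x}. (-1) ^ card S)"
    by (intro sum.cong refl) auto
  also have "\<dots> = (\<Sum>x\<in>X. if \<forall>j\<in>I. \<not> P j x then 1 else 0)"
    using assms(2) by (intro sum.cong) (auto simp: sum_Pow_minus_one_power)
  also have "\<dots> = int (card {x \<in> X. \<forall>j\<in>I. \<not> P j x})"
    by (simp add: sum.If_cases[OF assms(1)] Int_def conj_commute)
  finally show ?thesis ..
qed

lemma chi_Cstar_eq_chi_arith:
  assumes "\<forall>\<alpha>\<in>set A. \<alpha> \<in> zvec l"
  shows "chi_Cstar l A = chi_arith l A"
  unfolding chi_Cstar_def chi_arith_def using m_Cstar_eq_m_arith[OF assms] by (intro sum.cong) auto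

lemma char_qp_eq_poly_chi_arith:
  assumes A: "\<forall>\<alpha>\<in>set A. \<alpha> \<in> zvec l" and q: "q > 0" "rho l A dvd q"
  shows "int (char_qp l A q) = poly (chi_arith l A) (int q)"
proof -
  let ?X = "{..<l} \<rightarrow>\<^sub>E {..<q}"
  let ?P = "\<lambda>j x. (\<Sum>i<l. (A ! j) i * int (x i)) mod int q = 0"
  have max_div_dvd: "max_div l A S dvd q" if "S \<subseteq> {..<length A}" for S
    using that q(2) unfolding rho_def by (auto intro: dvd_trans[OF dvd_Lcm])
  have "char_qp l A q = card {x \<in> ?X. \<forall>j\<in>{..<length A}. \<not> ?P j x}"
    unfolding char_qp_def all_set_conv_all_nth by (simp add: Ball_def)
  then have "int (char_qp l A q)
      = (\<Sum>S\<in>Pow {..<length A}. (-1) ^ card S * int (card {x \<in> ?X. \<forall>j\<in>S. ?P j x}))"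
    using card_avoiding_inclusion_exclusion[of ?X "{..<length A}" ?P] by (simp add: finite_PiE)
  also have "\<dots> = (\<Sum>S\<in>Pow {..<length A}. (-1) ^ card S * int (m_arith l A S) * int q ^ (l - rankS A S))"
    using card_sublist_solutions[OF A _ q(1) max_div_dvd] by (intro sum.cong) (auto simp: mult_ac)
  also have "\<dots> = poly (chi_arith l A) (int q)"
    unfolding chi_arith_def by (simp add: poly_sum poly_monom)
  finally show ?thesis .
qed

theorem mainTheorem12:
  fixes l :: nat and A :: "(nat \<Rightarrow> int) list"
  assumes "\<forall>\<alpha>\<in>set A. \<alpha> \<in> zvec l"
  shows "(\<forall>q::nat. q > 0 \<and> rho l A dvd q \<longrightarrow>
            int (char_qp l A q) = poly (chi_Cstar l A) (int q))
       \<and> (\<forall>q::nat. q > 0 \<and> rho l A dvd q \<longrightarrow>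
            int (char_qp l A q) = poly (chi_arith l A) (int q))
       \<and> chi_Cstar l A = chi_arith l A"
  using char_qp_eq_poly_chi_arith[OF assms] chi_Cstar_eq_chi_arith[OF assms] by simp

end
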